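(* Let $N\ge1$, let $\omega_1,\omega_2$ be nonzero complex numbers with $\sin\frac{2\pi\omega_1}{\omega_2}\ne0$, and put $q=e^{2\pi i\omega_1/\omega_2}$. Fix complex constants $\gamma_{N1},\dots,\gamma_{NN}$, and let the following operators act on meromorphic functions of the variables $\gamma_{nj}$, $n=1,\dots,N-1$, $1\le j\le n$ (with $e^{\pm i\omega_1\partial_{\gamma_{nj}}}$ the shift $\gamma_{nj}\mapsto\gamma_{nj}\pm i\omega_1$): $$\varrho(K_{nn})=e^{\frac{2\pi}{\omega_2}\left(\sum_{j=1}^n\gamma_{nj}-\sum_{j=1}^{n-1}\gamma_{n-1,j}\right)},$$ $$\varrho(E_{n,n+1})=\frac{2i\,e^{\frac{\pi i\omega_1}{\omega_2}(n-1)}}{\sin\frac{2\pi\omega_1}{\omega_2}}\sum_{j=1}^n\frac{\prod_{r=1}^{n+1}\sinh\frac{2\pi}{\omega_2}(\gamma_{nj}-\gamma_{n+1,r}-\frac{i\omega_1}{2})}{\prod_{s\ne j}\sinh\frac{2\pi}{\omega_2}(\gamma_{nj}-\gamma_{ns})}e^{-i\omega_1\partial_{\gamma_{nj}}},$$ $$\varrho(E_{n+1,n})=-\frac{i\,e^{-\frac{\pi i\omega_1}{\omega_2}(n-1)}}{2\sin\frac{2\pi\omega_1}{\omega_2}}\sum_{j=1}^n\frac{\prod_{r=1}^{n-1}\sinh\frac{2\pi}{\omega_2}(\gamma_{nj}-\gamma_{n-1,r}+\frac{i\omega_1}{2})}{\prod_{s\ne j}\sinh\frac{2\pi}{\omega_2}(\gamma_{nj}-\gamma_{ns})}e^{i\omega_1\partial_{\gamma_{nj}}}.$$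 Then these operators define a representation of $U_q(\mathfrak{gl}(N))$ with $q=e^{2\pi i\omega_1/\omega_2}$, i.e. they satisfy all defining relations of $U_q(\mathfrak{gl}(N))$.
   Context: $U_q(\mathfrak{gl}(N))$ (here with $q$ specialized to the given complex number) is the algebra generated by $K_{nn}^{\pm1}$ ($1\le n\le N$), $E_{n,n+1},E_{n+1,n}$ ($1\le n\le N-1$) with relations: the $K$'s commute and $K_{nn}K_{nn}^{-1}=1$; $K_{nn}E_{m,m+1}K_{nn}^{-1}=q^{\delta_{nm}-\delta_{n,m+1}}E_{m,m+1}$; $K_{nn}E_{m+1,m}K_{nn}^{-1}=q^{\delta_{n,m+1}-\delta_{nm}}E_{m+1,m}$; $E_{n,n+1}E_{m+1,m}-E_{m+1,m}E_{n,n+1}=\delta_{nm}\frac{K_{nn}K_{n+1,n+1}^{-1}-K_{nn}^{-1}K_{n+1,n+1}}{q-q^{-1}}$; and for $X_n=E_{n,n+1}$ and for $X_n=E_{n+1,n}$: $[X_n,X_m]=0$ for $m\ne n\pm1$, $X_n^2X_{n+1}-(q+q^{-1})X_nX_{n+1}X_n+X_{n+1}X_n^2=0$, $X_{n+1}^2X_n-(q+q^{-1})X_{n+1}X_nX_{n+1}+X_nX_{n+1}^2=0$. Empty products are $1$. *)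

theory Defs
  imports Complex_Main
begin

text \<open>Points: an assignment x of the variables gamma_{nj} (n = 1..N-1, 1 <= j <= n), encoded
  as x n j.  Functions acted upon: arbitrary complex-valued functions of such assignments.\<close>

type_synonym point = "nat \<Rightarrow> nat \<Rightarrow> complex"
type_synonym fn = "point \<Rightarrow> complex"
type_synonym oper = "fn \<Rightarrow> fn"

text \<open>gamma_{nj}; the row n = N consists of the fixed constants gN j.\<close>
definition gam :: "nat \<Rightarrow> (nat \<Rightarrow> complex) \<Rightarrow> point \<Rightarrow> nat \<Rightarrow> nat \<Rightarrow> complex" where
  "gam N gN x n j = (if n = N then gN j else x n j)"

definition shift :: "point \<Rightarrow> nat \<Rightarrow> nat \<Rightarrow> complex \<Rightarrow> point" where
  "shift x n j d = x(n := (x n)(j := x n j + d))"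

definition Kexp :: "nat \<Rightarrow> complex \<Rightarrow> (nat \<Rightarrow> complex) \<Rightarrow> nat \<Rightarrow> point \<Rightarrow> complex" where
  "Kexp N w2 gN n x = 2 * of_real pi / w2 *
     ((\<Sum>j=1..n. gam N gN x n j) - (\<Sum>j=1..n-1. gam N gN x (n-1) j))"

definition Kop :: "nat \<Rightarrow> complex \<Rightarrow> (nat \<Rightarrow> complex) \<Rightarrow> nat \<Rightarrow> oper" where
  "Kop N w2 gN n f x = exp (Kexp N w2 gN n x) * f x"

definition Kinvop :: "nat \<Rightarrow> complex \<Rightarrow> (nat \<Rightarrow> complex) \<Rightarrow> nat \<Rightarrow> oper" where
  "Kinvop N w2 gN n f x = exp (- Kexp N w2 gN n x) * f x"

definition Eop :: "nat \<Rightarrow> complex \<Rightarrow> complex \<Rightarrow> (nat \<Rightarrow> complex) \<Rightarrow> nat \<Rightarrow> oper" where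
  "Eop N w1 w2 gN n f x =
     (2 * \<i> * exp (of_real pi * \<i> * w1 / w2 * (of_nat n - 1)) / sin (2 * of_real pi * w1 / w2)) *
     (\<Sum>j=1..n.
        (\<Prod>r=1..n+1. sinh (2 * of_real pi / w2 *
             (gam N gN x n j - gam N gN x (n+1) r - \<i> * w1 / 2)))
        / (\<Prod>s\<in>{1..n} - {j}. sinh (2 * of_real pi / w2 * (gam N gN x n j - gam N gN x n s)))
        * f (shift x n j (- \<i> * w1)))"

definition Fop :: "nat \<Rightarrow> complex \<Rightarrow> complex \<Rightarrow> (nat \<Rightarrow> complex) \<Rightarrow> nat \<Rightarrow> oper" where
  "Fop N w1 w2 gN n f x =
     - (\<i> * exp (- (of_real pi * \<i> * w1 / w2 * (of_nat n - 1))) / (2 * sin (2 * of_real pi * w1 / w2))) *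
     (\<Sum>j=1..n.
        (\<Prod>r=1..n-1. sinh (2 * of_real pi / w2 *
             (gam N gN x n j - gam N gN x (n-1) r + \<i> * w1 / 2)))
        / (\<Prod>s\<in>{1..n} - {j}. sinh (2 * of_real pi / w2 * (gam N gN x n j - gam N gN x n s)))
        * f (shift x n j (\<i> * w1)))"

text \<open>This set is invariant
  under all shifts occurring in the operators, and identities of difference operators with
  meromorphic coefficients are exactly pointwise identities on it.\<close>
definition generic :: "nat \<Rightarrow> complex \<Rightarrow> complex \<Rightarrow> point \<Rightarrow> bool" where
  "generic N w1 w2 x \<longleftrightarrow>
     (\<forall>n\<in>{1..<N}. \<forall>j\<in>{1..n}. \<forall>s\<in>{1..n}. j \<noteq> s \<longrightarrow>
        (\<forall>k::int. sinh (2 * of_real pi / w2 * (x n j - x n s + of_int k * \<i> * w1)) \<noteq> 0))"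

definition serre_rels :: "nat \<Rightarrow> complex \<Rightarrow> (nat \<Rightarrow> oper) \<Rightarrow> (point \<Rightarrow> bool) \<Rightarrow> bool" where
  "serre_rels N q X D \<longleftrightarrow>
     (\<forall>n\<in>{1..<N}. \<forall>m\<in>{1..<N}. m \<noteq> n + 1 \<and> n \<noteq> m + 1 \<longrightarrow>
        (\<forall>f x. D x \<longrightarrow> X n (X m f) x = X m (X n f) x)) \<and>
     (\<forall>n. 1 \<le> n \<and> n + 1 < N \<longrightarrow> (\<forall>f x. D x \<longrightarrow>
        X n (X n (X (n+1) f)) x - (q + inverse q) * X n (X (n+1) (X n f)) x
          + X (n+1) (X n (X n f)) x = 0)) \<and>
     (\<forall>n. 1 \<le> n \<and> n + 1 < N \<longrightarrow> (\<forall>f x. D x \<longrightarrow>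
        X (n+1) (X (n+1) (X n f)) x - (q + inverse q) * X (n+1) (X n (X (n+1) f)) x
          + X n (X (n+1) (X (n+1) f)) x = 0))"

definition Uq_gl_rep :: "nat \<Rightarrow> complex \<Rightarrow> (nat \<Rightarrow> oper) \<Rightarrow> (nat \<Rightarrow> oper) \<Rightarrow> (nat \<Rightarrow> oper)
    \<Rightarrow> (nat \<Rightarrow> oper) \<Rightarrow> (point \<Rightarrow> bool) \<Rightarrow> bool" where
  "Uq_gl_rep N q K Ki E F D \<longleftrightarrow>
     (\<forall>n\<in>{1..N}. \<forall>m\<in>{1..N}. \<forall>f x. D x \<longrightarrow> K n (K m f) x = K m (K n f) x) \<and>
     (\<forall>n\<in>{1..N}. \<forall>f x. D x \<longrightarrow> K n (Ki n f) x = f x \<and> Ki n (K n f) x = f x) \<and>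
     (\<forall>n\<in>{1..N}. \<forall>m\<in>{1..<N}. \<forall>f x. D x \<longrightarrow>
        K n (E m (Ki n f)) x = q powi (of_bool (n = m) - of_bool (n = m + 1)) * E m f x) \<and>
     (\<forall>n\<in>{1..N}. \<forall>m\<in>{1..<N}. \<forall>f x. D x \<longrightarrow>
        K n (F m (Ki n f)) x = q powi (of_bool (n = m + 1) - of_bool (n = m)) * F m f x) \<and>
     (\<forall>n\<in>{1..<N}. \<forall>m\<in>{1..<N}. \<forall>f x. D x \<longrightarrow>
        E n (F m f) x - F m (E n f) x =
          (if n = m then (K n (Ki (n+1) f) x - Ki n (K (n+1) f) x) / (q - inverse q) else 0)) \<and>
     serre_rels N q E D \<and> serre_rels N q F D"

end

theory Submission
  imports Defs "HOL-Analysis.Complex_Transcendental"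
begin

text \<open>
  Both E_n = rho(E_{n,n+1}) and F_n = rho(E_{n+1,n}) are instances of one difference operator
  \<open>row_op\<close>: it shifts a single variable gamma_pj of row p by d (= -i w1, resp. i w1) with coefficient
  prod_r sinh T(gamma_pj - gamma_p'r + d/2) / prod_{s ~= j} sinh T(gamma_pj - gamma_ps),  T = 2 pi / w2,
  where p' = p + 1 for E and p' = p - 1 for F.

  The K_nn multiply by exponentials of linear forms in the gammas, so they conjugate such an
  operator into a multiple of itself. Operators on non-adjacent rows commute; for E_n and F_{n+1}
  the coefficients of the two orders agree because sinh is odd. In [E_n, F_n] the terms moving two
  different variables cancel in pairs, and the remaining diagonal terms add up, by the partial
  fraction identity
    sum_i prod_r sinh (u_i - v_r) / prod_{k ~= i} sinh (u_i - u_k) = sinh (sum u - sum v)   (|I| = |J|)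
  applied to the nodes T gamma_nj and T gamma_nj - T d, to exactly the multiple of
  sinh (T d) sinh (Kexp_n - Kexp_{n+1}) that the Cartan side requires. In a Serre relation the terms
  are grouped by the two variables shifted in the row acted on twice; each symmetric pair of terms
  vanishes by a three-term identity for sinh, which becomes a rational identity in exponentials.
\<close>

section \<open>Difference operators along one row\<close>

definition row_coeff ::
    "nat \<Rightarrow> (nat \<Rightarrow> complex) \<Rightarrow> complex \<Rightarrow> complex \<Rightarrow> nat \<Rightarrow> nat \<Rightarrow> point \<Rightarrow> nat \<Rightarrow> complex" where
  "row_coeff N gN T d p p' x j =
     (\<Prod>r=1..p'. sinh (T * (gam N gN x p j - gam N gN x p' r + d/2))) /
     (\<Prod>s\<in>{1..p}-{j}. sinh (T * (gam N gN x p j - gam N gN x p s)))"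

definition row_op ::
    "nat \<Rightarrow> (nat \<Rightarrow> complex) \<Rightarrow> complex \<Rightarrow> complex \<Rightarrow> complex \<Rightarrow> nat \<Rightarrow> nat \<Rightarrow> oper" where
  "row_op N gN T d C p p' f x = C * (\<Sum>j=1..p. row_coeff N gN T d p p' x j * f (shift x p j d))"

lemma gam_shift_self: "p \<noteq> N \<Longrightarrow> gam N gN (shift x p j d) p j = gam N gN x p j + d"
  by (simp add: gam_def shift_def)

lemma gam_shift_other: "q \<noteq> p \<or> r \<noteq> j \<Longrightarrow> gam N gN (shift x p j d) q r = gam N gN x q r"
  by (auto simp: gam_def shift_def)

lemma shift_commute: "shift (shift x p j d) q k e = shift (shift x q k e) p j d"
  by (rule ext, rule ext) (auto simp: shift_def)

lemma shift_shift_neg: "shift (shift x p j d) p j (- d) = x"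
  by (rule ext, rule ext) (auto simp: shift_def)

lemma row_coeff_shift_other_row:
  "q \<noteq> p \<Longrightarrow> q \<noteq> p' \<Longrightarrow> row_coeff N gN T d p p' (shift x q k e) j = row_coeff N gN T d p p' x j"
  unfolding row_coeff_def by (simp add: gam_shift_other)

lemma row_op_commute_disjoint:
  assumes "q \<noteq> p" "q \<noteq> p'" "p \<noteq> q'"
  shows "row_op N gN T d C p p' (row_op N gN T e D q q' f) x =
         row_op N gN T e D q q' (row_op N gN T d C p p' f) x"
proof -
  let ?A = "row_coeff N gN T d p p' x" and ?B = "row_coeff N gN T e q q' x"
  have "row_op N gN T d C p p' (row_op N gN T e D q q' f) x =
      C * D * (\<Sum>j=1..p. \<Sum>k=1..q. ?A j * ?B k * f (shift (shift x p j d) q k e))"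
    unfolding row_op_def using assms
    by (simp add: row_coeff_shift_other_row sum_distrib_left mult_ac)
  also have "\<dots> = C * D * (\<Sum>k=1..q. \<Sum>j=1..p. ?A j * ?B k * f (shift (shift x q k e) p j d))"
    by (subst sum.swap) (simp add: shift_commute)
  also have "\<dots> = row_op N gN T e D q q' (row_op N gN T d C p p' f) x"
    unfolding row_op_def using assms
    by (simp add: row_coeff_shift_other_row sum_distrib_left mult_ac)
  finally show ?thesis .
qed

text \<open>A shift of one variable changes only the split-off factors, so every identity between products
  of coefficients below reduces to an identity between a few \<open>sinh\<close> factors.\<close>
definition coeff_num ::
    "nat \<Rightarrow> (nat \<Rightarrow> complex) \<Rightarrow> complex \<Rightarrow> complex \<Rightarrow> nat \<Rightarrow> nat \<Rightarrow> point \<Rightarrow> nat \<Rightarrow> complex" where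
  "coeff_num N gN T d p p' y j = (\<Prod>r\<in>{1..p'}. sinh (T * (gam N gN y p j - gam N gN y p' r + d/2)))"

definition coeff_num_but ::
    "nat \<Rightarrow> (nat \<Rightarrow> complex) \<Rightarrow> complex \<Rightarrow> complex \<Rightarrow> nat \<Rightarrow> nat \<Rightarrow> point \<Rightarrow> nat \<Rightarrow> nat \<Rightarrow> complex" where
  "coeff_num_but N gN T d p p' y j l =
     (\<Prod>r\<in>{1..p'}-{l}. sinh (T * (gam N gN y p j - gam N gN y p' r + d/2)))"

definition coeff_num_but2 ::
    "nat \<Rightarrow> (nat \<Rightarrow> complex) \<Rightarrow> complex \<Rightarrow> complex \<Rightarrow> nat \<Rightarrow> nat \<Rightarrow> point \<Rightarrow> nat \<Rightarrow> nat \<Rightarrow> nat \<Rightarrow> complex" where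
  "coeff_num_but2 N gN T d p p' y j l m =
     (\<Prod>r\<in>{1..p'}-{l}-{m}. sinh (T * (gam N gN y p j - gam N gN y p' r + d/2)))"

definition coeff_den :: "nat \<Rightarrow> (nat \<Rightarrow> complex) \<Rightarrow> complex \<Rightarrow> nat \<Rightarrow> point \<Rightarrow> nat \<Rightarrow> complex" where
  "coeff_den N gN T p y j = (\<Prod>s\<in>{1..p}-{j}. sinh (T * (gam N gN y p j - gam N gN y p s)))"

definition coeff_den_but :: "nat \<Rightarrow> (nat \<Rightarrow> complex) \<Rightarrow> complex \<Rightarrow> nat \<Rightarrow> point \<Rightarrow> nat \<Rightarrow> nat \<Rightarrow> complex" where
  "coeff_den_but N gN T p y j k = (\<Prod>s\<in>{1..p}-{j}-{k}. sinh (T * (gam N gN y p j - gam N gN y p s)))"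

lemma row_coeff_eq_num_den: "row_coeff N gN T d p p' y j = coeff_num N gN T d p p' y j / coeff_den N gN T p y j"
  unfolding row_coeff_def coeff_num_def coeff_den_def atLeastAtMost_iff by simp

lemma coeff_num_split: "l \<in> {1..p'} \<Longrightarrow>
  coeff_num N gN T d p p' y j =
    coeff_num_but N gN T d p p' y j l * sinh (T * (gam N gN y p j - gam N gN y p' l + d/2))"
  unfolding coeff_num_def coeff_num_but_def by (subst prod.remove[where x=l]) (auto simp: mult.commute)

lemma coeff_num_but_split: "m \<in> {1..p'} \<Longrightarrow> m \<noteq> l \<Longrightarrow>
  coeff_num_but N gN T d p p' y j l =
    coeff_num_but2 N gN T d p p' y j l m * sinh (T * (gam N gN y p j - gam N gN y p' m + d/2))"
  unfolding coeff_num_but2_def coeff_num_but_def by (subst prod.remove[where x=m]) (auto simp: mult.commute)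

lemma coeff_den_split: "k \<in> {1..p} \<Longrightarrow> k \<noteq> j \<Longrightarrow>
  coeff_den N gN T p y j = coeff_den_but N gN T p y j k * sinh (T * (gam N gN y p j - gam N gN y p k))"
  unfolding coeff_den_def coeff_den_but_def by (subst prod.remove[where x=k]) (auto simp: mult.commute)

lemma coeff_num_shift: "q \<noteq> p' \<Longrightarrow> q \<noteq> p \<or> i \<noteq> j \<Longrightarrow>
  coeff_num N gN T d p p' (shift y q i e) j = coeff_num N gN T d p p' y j"
  unfolding coeff_num_def by (intro prod.cong refl) (auto simp: gam_shift_other)

lemma coeff_num_but_shift: "q \<noteq> p \<or> i \<noteq> j \<Longrightarrow> q \<noteq> p' \<or> i = l \<Longrightarrow>
  coeff_num_but N gN T d p p' (shift y q i e) j l = coeff_num_but N gN T d p p' y j l"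
  unfolding coeff_num_but_def by (intro prod.cong refl) (auto simp: gam_shift_other)

lemma coeff_num_but2_shift: "q \<noteq> p \<or> i \<noteq> j \<Longrightarrow> q \<noteq> p' \<or> i = l \<or> i = m \<Longrightarrow>
  coeff_num_but2 N gN T d p p' (shift y q i e) j l m = coeff_num_but2 N gN T d p p' y j l m"
  unfolding coeff_num_but2_def by (intro prod.cong refl) (auto simp: gam_shift_other)

lemma coeff_den_shift: "q \<noteq> p \<Longrightarrow> coeff_den N gN T p (shift y q i e) j = coeff_den N gN T p y j"
  unfolding coeff_den_def by (intro prod.cong refl) (simp add: gam_shift_other)

lemma coeff_den_but_shift: "q \<noteq> p \<or> i = k \<Longrightarrow> k \<noteq> j \<Longrightarrow>
  coeff_den_but N gN T p (shift y q i e) j k = coeff_den_but N gN T p y j k"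
  unfolding coeff_den_but_def by (intro prod.cong refl) (auto simp: gam_shift_other)

lemma coeff_den_but_nonzero:
  assumes "\<And>s. s \<in> {1..p} \<Longrightarrow> s \<noteq> j \<Longrightarrow> sinh (T * (gam N gN y p j - gam N gN y p s)) \<noteq> 0"
  shows "coeff_den_but N gN T p y j k \<noteq> 0"
  unfolding coeff_den_but_def using assms by (simp add: prod_zero_iff)

lemma coeff_den_nonzero:
  assumes "\<And>s. s \<in> {1..p} \<Longrightarrow> s \<noteq> j \<Longrightarrow> sinh (T * (gam N gN y p j - gam N gN y p s)) \<noteq> 0"
  shows "coeff_den N gN T p y j \<noteq> 0"
  unfolding coeff_den_def using assms by (simp add: prod_zero_iff)

lemma row_coeff_split_num_den:
  assumes "j \<in> {1..p}" "k \<in> {1..p}" "k \<noteq> j" "l \<in> {1..p'}"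
  shows "row_coeff N gN T d p p' y j =
    coeff_num_but N gN T d p p' y j l * sinh (T * (gam N gN y p j - gam N gN y p' l + d/2))
      / (coeff_den_but N gN T p y j k * sinh (T * (gam N gN y p j - gam N gN y p k)))"
  unfolding row_coeff_eq_num_den using assms by (simp add: coeff_num_split coeff_den_split)

lemma row_coeff_split_num:
  assumes "l \<in> {1..p'}"
  shows "row_coeff N gN T d p p' y j =
    coeff_num_but N gN T d p p' y j l * sinh (T * (gam N gN y p j - gam N gN y p' l + d/2))
      / coeff_den N gN T p y j"
  unfolding row_coeff_eq_num_den using assms by (simp add: coeff_num_split)

lemma row_coeff_split_num2:
  assumes "l \<in> {1..p'}" "m \<in> {1..p'}" "m \<noteq> l"
  shows "row_coeff N gN T d p p' y j =
    (coeff_num_but2 N gN T d p p' y j l m * sinh (T * (gam N gN y p j - gam N gN y p' m + d/2)))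
      * sinh (T * (gam N gN y p j - gam N gN y p' l + d/2)) / coeff_den N gN T p y j"
  unfolding row_coeff_eq_num_den using assms by (simp add: coeff_num_split coeff_num_but_split)

lemma row_coeff_split_den:
  assumes "m \<in> {1..p}" "m \<noteq> l"
  shows "row_coeff N gN T d p p' y l =
    coeff_num N gN T d p p' y l / (coeff_den_but N gN T p y l m * sinh (T * (gam N gN y p l - gam N gN y p m)))"
  unfolding row_coeff_eq_num_den using assms by (simp add: coeff_den_split)

lemma sinh_serre_identity:
  fixes u v h :: complex
  shows "(sinh (u+h) * sinh (v+h) - (exp (2*h) + exp (-(2*h))) * sinh (u+h) * sinh (v-h)
            + sinh (u-h) * sinh (v-h)) * sinh (u-v-2*h)
       = (sinh (v+h) * sinh (u+h) - (exp (2*h) + exp (-(2*h))) * sinh (v+h) * sinh (u-h)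
            + sinh (v-h) * sinh (u-h)) * sinh (v-u-2*h)"
proof -
  define s where "s X = X - inverse X" for X :: complex
  define U V H where "U = exp u" and "V = exp v" and "H = exp h"
  have nz: "U \<noteq> 0" "V \<noteq> 0" "H \<noteq> 0" unfolding U_def V_def H_def by simp_all
  have rational: "(s (U*H) * s (V*H) - (H*H + inverse (H*H)) * s (U*H) * s (V/H) + s (U/H) * s (V/H))
      * s (U/(V*(H*H)))
    = (s (V*H) * s (U*H) - (H*H + inverse (H*H)) * s (V*H) * s (U/H) + s (V/H) * s (U/H))
      * s (V/(U*(H*H)))"
    using nz unfolding s_def by (simp add: field_simps)
  have sinh_exp: "sinh z = s (exp z) / 2" for z
    by (simp add: s_def sinh_field_def exp_minus)
  have e: "exp (u+h) = U*H" "exp (v+h) = V*H" "exp (u-h) = U/H" "exp (v-h) = V/H"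
    "exp (u-v-2*h) = U/(V*(H*H))" "exp (v-u-2*h) = V/(U*(H*H))"
    "exp (2*h) = H*H" "exp (-(2*h)) = inverse (H*H)"
    unfolding U_def V_def H_def
    by (simp_all only: exp_double power2_eq_square exp_add exp_diff exp_minus divide_divide_eq_left)
  have halves: "(a/2 * (b/2) - Q * (a/2) * (c/2) + d/2 * (c/2)) * (e/2) = (a*b - Q*a*c + d*c) * e / 8"
    for a b c d e Q :: complex
    by (simp add: field_simps)
  show ?thesis
    unfolding sinh_exp e halves rational ..
qed

lemma sinh_add_diff_eq:
  fixes y h :: complex
  shows "sinh (y + 2*h) + sinh (y - 2*h) = (exp (2*h) + exp (-(2*h))) * sinh y"
proof -
  have "sinh (y + 2*h) + sinh (y - 2*h) = 2 * sinh y * cosh (2*h)"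
    by (simp add: sinh_add sinh_diff)
  then show ?thesis by (simp add: cosh_field_def)
qed

section \<open>A partial fraction identity for sinh\<close>

lemma cosh_sinh_combination_unique:
  fixes P Q P' Q' w w' :: complex
  assumes "P * cosh w - Q * sinh w = P' * cosh w - Q' * sinh w"
    and "P * cosh w' - Q * sinh w' = P' * cosh w' - Q' * sinh w'"
    and nz: "sinh (w - w') \<noteq> 0"
  shows "P = P' \<and> Q = Q'"
proof -
  define a b where "a = P - P'" and "b = Q - Q'"
  have e: "a * cosh w = b * sinh w" "a * cosh w' = b * sinh w'"
    using assms(1,2) unfolding a_def b_def by (simp_all add: algebra_simps)
  have "a * sinh (w - w') = a * cosh w' * sinh w - a * cosh w * sinh w'"
    by (simp add: sinh_diff algebra_simps)
  also have "\<dots> = 0" using e by (simp add: algebra_simps)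
  finally have "a = 0" using nz by simp
  have "b * sinh (w - w') = b * sinh w * cosh w' - b * sinh w' * cosh w"
    by (simp add: sinh_diff algebra_simps)
  also have "\<dots> = a * cosh w * cosh w' - a * cosh w' * cosh w" using e by simp
  also have "\<dots> = 0" by simp
  finally have "b = 0" using nz by simp
  show ?thesis using \<open>a = 0\<close> \<open>b = 0\<close> unfolding a_def b_def by simp
qed

lemma sinh_partial_fraction_drop_node:
  fixes u c :: "'a \<Rightarrow> complex"
  assumes "finite I" "m \<in> I" and nz: "\<And>i. i \<in> I \<Longrightarrow> i \<noteq> m \<Longrightarrow> sinh (u i - u m) \<noteq> 0"
  shows "(\<Sum>i\<in>I. c i / (\<Prod>k\<in>I-{i}. sinh (u i - u k)) * sinh (u i - u m))
       = (\<Sum>i\<in>I-{m}. c i / (\<Prod>k\<in>I-{m}-{i}. sinh (u i - u k)))"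
proof -
  have "(\<Sum>i\<in>I. c i / (\<Prod>k\<in>I-{i}. sinh (u i - u k)) * sinh (u i - u m))
      = (\<Sum>i\<in>I-{m}. c i / (\<Prod>k\<in>I-{i}. sinh (u i - u k)) * sinh (u i - u m))"
    using assms(1,2) by (simp add: sum.remove)
  also have "\<dots> = (\<Sum>i\<in>I-{m}. c i / (\<Prod>k\<in>I-{m}-{i}. sinh (u i - u k)))"
  proof (intro sum.cong refl)
    fix i assume i: "i \<in> I - {m}"
    have "I - {m} - {i} = I - {i} - {m}" by auto
    moreover have "m \<in> I - {i}" using i assms(2) by auto
    ultimately have "(\<Prod>k\<in>I-{i}. sinh (u i - u k)) = sinh (u i - u m) * (\<Prod>k\<in>I-{m}-{i}. sinh (u i - u k))"
      using prod.remove[of "I - {i}" m] assms(1) by simp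
    then show "c i / (\<Prod>k\<in>I-{i}. sinh (u i - u k)) * sinh (u i - u m)
             = c i / (\<Prod>k\<in>I-{m}-{i}. sinh (u i - u k))"
      using nz i by simp
  qed
  finally show ?thesis .
qed

text \<open>Both sides are of the form \<open>P cosh w - Q sinh w\<close> as functions of one node \<open>w = v p\<close>.
  By induction they agree at every \<open>w = u m\<close>, and two such points determine \<open>P\<close> and \<open>Q\<close>.\<close>
theorem sinh_partial_fraction:
  fixes u :: "'a \<Rightarrow> complex" and v :: "'b \<Rightarrow> complex"
  assumes "finite I" "finite J" "card I = card J"
    and "\<And>i k. i \<in> I \<Longrightarrow> k \<in> I \<Longrightarrow> i \<noteq> k \<Longrightarrow> sinh (u i - u k) \<noteq> 0"
  shows "(\<Sum>i\<in>I. (\<Prod>r\<in>J. sinh (u i - v r)) / (\<Prod>k\<in>I-{i}. sinh (u i - u k)))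
           = sinh (sum u I - sum v J)"
  using assms
proof (induction "card I" arbitrary: I J v)
  case 0
  then show ?case by simp
next
  case (Suc n)
  then obtain p where p: "p \<in> J" by (metis card.empty ex_in_conv nat.distinct(1))
  define c where "c i = (\<Prod>r\<in>J-{p}. sinh (u i - v r)) / (\<Prod>k\<in>I-{i}. sinh (u i - u k))" for i
  define S where "S = sum u I - sum v (J-{p})"
  have lhs: "(\<Sum>i\<in>I. (\<Prod>r\<in>J. sinh (u i - v r)) / (\<Prod>k\<in>I-{i}. sinh (u i - u k)))
      = (\<Sum>i\<in>I. c i * sinh (u i - v p))"
    unfolding c_def by (intro sum.cong refl) (simp add: prod.remove[OF Suc.prems(2) p])
  have rhs: "sinh (sum u I - sum v J) = sinh (S - v p)"
    unfolding S_def by (simp add: sum.remove[OF Suc.prems(2) p] algebra_simps)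
  have at_nodes: "(\<Sum>i\<in>I. c i * sinh (u i - u m)) = sinh (S - u m)" if m: "m \<in> I" for m
  proof -
    have "(\<Sum>i\<in>I. c i * sinh (u i - u m))
        = (\<Sum>i\<in>I-{m}. (\<Prod>r\<in>J-{p}. sinh (u i - v r)) / (\<Prod>k\<in>I-{m}-{i}. sinh (u i - u k)))"
      unfolding c_def times_divide_eq_left[symmetric]
      by (rule sinh_partial_fraction_drop_node) (use Suc.prems m in auto)
    also have "\<dots> = sinh (sum u (I-{m}) - sum v (J-{p}))"
      using Suc.hyps(2) Suc.prems m p by (intro Suc.hyps(1)) (auto simp: card_Diff_singleton)
    also have "\<dots> = sinh (S - u m)"
      unfolding S_def by (simp add: sum.remove[OF Suc.prems(1) m] algebra_simps)
    finally show ?thesis .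
  qed
  have linear: "(\<Sum>i\<in>I. c i * sinh (u i - w))
      = (\<Sum>i\<in>I. c i * sinh (u i)) * cosh w - (\<Sum>i\<in>I. c i * cosh (u i)) * sinh w" for w
  proof -
    have "(\<Sum>i\<in>I. c i * sinh (u i - w)) = (\<Sum>i\<in>I. c i * sinh (u i) * cosh w - c i * cosh (u i) * sinh w)"
      by (simp add: sinh_diff algebra_simps)
    then show ?thesis by (simp add: sum_subtractf sum_distrib_right)
  qed
  have S_linear: "sinh (S - w) = sinh S * cosh w - cosh S * sinh w" for w
    by (simp add: sinh_diff)
  show ?case
  proof (cases "n = 0")
    case True
    then obtain m where "I = {m}" using Suc.hyps(2) by (metis One_nat_def card_1_singletonE)
    moreover have "J = {p}" using True Suc.hyps(2) Suc.prems(3) p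
      by (metis One_nat_def card_1_singletonE singletonD)
    ultimately show ?thesis by simp
  next
    case False
    obtain m where m: "m \<in> I" using Suc.hyps(2) by (metis card.empty ex_in_conv nat.distinct(1))
    with False Suc.hyps(2) have "card (I - {m}) \<noteq> 0" by (simp add: card_Diff_singleton)
    then obtain k where "k \<in> I - {m}" by (metis card.empty ex_in_conv)
    with m have mk: "m \<in> I" "k \<in> I" "m \<noteq> k" by auto
    have "(\<Sum>i\<in>I. c i * sinh (u i)) = sinh S \<and> (\<Sum>i\<in>I. c i * cosh (u i)) = cosh S"
      using at_nodes[of m] at_nodes[of k] Suc.prems(4)[OF mk]
      unfolding linear S_linear by (intro cosh_sinh_combination_unique) (use mk in auto)
    then show ?thesis unfolding lhs rhs linear S_linear by simp
  qed
qed

definition shifted_nodes :: "complex \<Rightarrow> ('a \<Rightarrow> complex) \<Rightarrow> 'a + 'a \<Rightarrow> complex" where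
  "shifted_nodes e u = case_sum u (\<lambda>j. u j - e)"

lemma shifted_nodes_simps [simp]:
  "shifted_nodes e u (Inl j) = u j" "shifted_nodes e u (Inr j) = u j - e"
  by (simp_all add: shifted_nodes_def)

lemma prod_sinh_shifted_nodes_Inl:
  assumes "finite P" "j \<in> P"
  shows "(\<Prod>k\<in>(P <+> P) - {Inl j}. sinh (u j - shifted_nodes e u k))
       = (\<Prod>s\<in>P-{j}. sinh (u j - u s)) * (sinh e * (\<Prod>s\<in>P-{j}. sinh (u j - u s + e)))"
proof -
  have "(P <+> P) - {Inl j} = (P - {j}) <+> P" by auto
  then have "(\<Prod>k\<in>(P <+> P) - {Inl j}. sinh (u j - shifted_nodes e u k))
      = (\<Prod>s\<in>P-{j}. sinh (u j - u s)) * (\<Prod>s\<in>P. sinh (u j - u s + e))"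
    using assms(1) by (simp add: prod.Plus comp_def algebra_simps)
  also have "(\<Prod>s\<in>P. sinh (u j - u s + e)) = sinh e * (\<Prod>s\<in>P-{j}. sinh (u j - u s + e))"
    using assms by (simp add: prod.remove)
  finally show ?thesis .
qed

lemma prod_sinh_shifted_nodes_Inr:
  assumes "finite P" "j \<in> P"
  shows "(\<Prod>k\<in>(P <+> P) - {Inr j}. sinh (u j - e - shifted_nodes e u k))
       = (- sinh e * (\<Prod>s\<in>P-{j}. sinh (u j - u s - e))) * (\<Prod>s\<in>P-{j}. sinh (u j - u s))"
proof -
  have "(P <+> P) - {Inr j} = P <+> (P - {j})" by auto
  then have "(\<Prod>k\<in>(P <+> P) - {Inr j}. sinh (u j - e - shifted_nodes e u k))
      = (\<Prod>s\<in>P. sinh (u j - u s - e)) * (\<Prod>s\<in>P-{j}. sinh (u j - u s))"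
    using assms(1) by (simp add: prod.Plus comp_def algebra_simps)
  also have "(\<Prod>s\<in>P. sinh (u j - u s - e)) = - sinh e * (\<Prod>s\<in>P-{j}. sinh (u j - u s - e))"
    using assms by (simp add: prod.remove)
  finally show ?thesis .
qed

lemma sinh_partial_fraction_shifted_nodes:
  fixes u :: "'a \<Rightarrow> complex" and v :: "'b \<Rightarrow> complex"
  assumes fin: "finite P" "finite J" and card: "card J = 2 * card P"
    and nz: "\<And>j k. j \<in> P \<Longrightarrow> k \<in> P \<Longrightarrow> j \<noteq> k \<Longrightarrow> sinh (u j - u k) \<noteq> 0"
      "\<And>j k. j \<in> P \<Longrightarrow> k \<in> P \<Longrightarrow> j \<noteq> k \<Longrightarrow> sinh (u j - u k + e) \<noteq> 0"
      "sinh e \<noteq> 0"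
  shows "(\<Sum>j\<in>P. (\<Prod>r\<in>J. sinh (u j - v r))
              / ((\<Prod>s\<in>P-{j}. sinh (u j - u s)) * (sinh e * (\<Prod>s\<in>P-{j}. sinh (u j - u s + e))))
            + (\<Prod>r\<in>J. sinh (u j - e - v r))
              / ((- sinh e * (\<Prod>s\<in>P-{j}. sinh (u j - u s - e))) * (\<Prod>s\<in>P-{j}. sinh (u j - u s))))
       = sinh (2 * sum u P - of_nat (card P) * e - sum v J)"
proof -
  let ?U = "shifted_nodes e u"
  have across: "sinh (u j - (u m - e)) \<noteq> 0" if "j \<in> P" "m \<in> P" for j m
  proof (cases "j = m")
    case False
    have eq: "u j - (u m - e) = u j - u m + e" by simp
    show ?thesis unfolding eq using nz(2)[OF that False] .
  qed (use nz(3) in simp)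
  have across': "sinh (u m - e - u j) \<noteq> 0" if "j \<in> P" "m \<in> P" for j m
  proof -
    have "u m - e - u j = - (u j - (u m - e))" by simp
    then show ?thesis using across[OF that] by (simp only: sinh_minus neg_equal_0_iff_equal not_False_eq_True)
  qed
  have distinct: "sinh (?U i - ?U k) \<noteq> 0" if "i \<in> P <+> P" "k \<in> P <+> P" "i \<noteq> k" for i k
    using that nz(1) across across' by (cases i; cases k) auto
  have "(\<Sum>i\<in>P <+> P. (\<Prod>r\<in>J. sinh (?U i - v r)) / (\<Prod>k\<in>(P <+> P)-{i}. sinh (?U i - ?U k)))
      = sinh (sum ?U (P <+> P) - sum v J)"
    by (rule sinh_partial_fraction) (use fin card distinct in \<open>auto simp: card_Plus\<close>)
  moreover have "sum ?U (P <+> P) = 2 * sum u P - of_nat (card P) * e"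
    using fin by (simp add: sum.Plus comp_def sum_subtractf)
  moreover have "(\<Sum>i\<in>P <+> P. (\<Prod>r\<in>J. sinh (?U i - v r)) / (\<Prod>k\<in>(P <+> P)-{i}. sinh (?U i - ?U k)))
      = (\<Sum>j\<in>P. (\<Prod>r\<in>J. sinh (u j - v r)) / (\<Prod>k\<in>(P <+> P)-{Inl j}. sinh (u j - ?U k))
            + (\<Prod>r\<in>J. sinh (u j - e - v r)) / (\<Prod>k\<in>(P <+> P)-{Inr j}. sinh (u j - e - ?U k)))"
    using fin by (simp add: sum.Plus sum.distrib comp_def)
  ultimately show ?thesis
    using fin by (simp add: prod_sinh_shifted_nodes_Inl prod_sinh_shifted_nodes_Inr cong: sum.cong)
qed

text \<open>The diagonal terms of \<open>[E, F]\<close> on row \<open>p\<close>: the nodes are \<open>T a j\<close> and \<open>T a j - T d\<close>, the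
  numerator nodes \<open>T b r - T d/2\<close> and \<open>T c r - T d/2\<close>.\<close>
lemma sinh_partial_fraction_shifted_pairs:
  fixes a b c :: "nat \<Rightarrow> complex" and T d :: complex
  assumes card: "p' + p'' = 2 * p"
    and g1: "\<And>j k. j \<in> {1..p} \<Longrightarrow> k \<in> {1..p} \<Longrightarrow> j \<noteq> k \<Longrightarrow> sinh (T*(a j - a k)) \<noteq> 0"
    and g2: "\<And>j k. j \<in> {1..p} \<Longrightarrow> k \<in> {1..p} \<Longrightarrow> j \<noteq> k \<Longrightarrow> sinh (T*(a j - (a k + d))) \<noteq> 0"
    and g3: "sinh (T*d) \<noteq> 0"
  shows "(\<Sum>j\<in>{1..p}.
      ((\<Prod>r\<in>{1..p'}. sinh (T*(a j - b r + d/2))) / (\<Prod>s\<in>{1..p}-{j}. sinh (T*(a j - a s))))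
       * ((\<Prod>r\<in>{1..p''}. sinh (T*(a j + d - c r + - d/2))) / (\<Prod>s\<in>{1..p}-{j}. sinh (T*(a j + d - a s))))
    - ((\<Prod>r\<in>{1..p''}. sinh (T*(a j - c r + - d/2))) / (\<Prod>s\<in>{1..p}-{j}. sinh (T*(a j - a s))))
       * ((\<Prod>r\<in>{1..p'}. sinh (T*(a j + - d - b r + d/2))) / (\<Prod>s\<in>{1..p}-{j}. sinh (T*(a j + - d - a s)))))
    = sinh (T*d) * sinh (T * (2 * sum a {1..p} - sum b {1..p'} - sum c {1..p''}))"
  (is "sum ?f _ = _")
proof -
  define v where "v = case_sum (\<lambda>r. T * b r - T * d/2) (\<lambda>r. T * c r - T * d/2)"
  let ?P = "{1..p}" and ?J = "{1..p'} <+> {1..p''}"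
  have shifted: "sinh (T * a j - T * a k + T * d) \<noteq> 0" if "j \<in> ?P" "k \<in> ?P" "j \<noteq> k" for j k
  proof -
    have "T * a j - T * a k + T * d = - (T*(a k - (a j + d)))" by (simp add: algebra_simps)
    then show ?thesis using g2[OF that(2,1) not_sym[OF that(3)]] by simp
  qed
  have partial: "(\<Sum>j\<in>?P. (\<Prod>r\<in>?J. sinh (T * a j - v r))
        / ((\<Prod>s\<in>?P-{j}. sinh (T * a j - T * a s)) * (sinh (T*d) * (\<Prod>s\<in>?P-{j}. sinh (T * a j - T * a s + T*d))))
      + (\<Prod>r\<in>?J. sinh (T * a j - T*d - v r))
        / ((- sinh (T*d) * (\<Prod>s\<in>?P-{j}. sinh (T * a j - T * a s - T*d))) * (\<Prod>s\<in>?P-{j}. sinh (T * a j - T * a s))))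
    = sinh (2 * (\<Sum>j\<in>?P. T * a j) - of_nat (card ?P) * (T*d) - sum v ?J)"
    using g1 shifted g3 card
    by (intro sinh_partial_fraction_shifted_nodes) (auto simp: card_Plus right_diff_distrib)
  have exponent: "2 * (\<Sum>j\<in>?P. T * a j) - of_nat (card ?P) * (T*d) - sum v ?J
      = T * (2 * sum a {1..p} - sum b {1..p'} - sum c {1..p''})"
  proof -
    have "(of_nat p' + of_nat p'' :: complex) = 2 * of_nat p"
      using card by (metis of_nat_add of_nat_mult of_nat_numeral)
    then have half_shifts: "T * (d * of_nat p') / 2 + T * (d * of_nat p'') / 2 = T * (d * of_nat p)"
      by (simp add: field_simps flip: distrib_left)
    show ?thesis
      using half_shifts unfolding v_def
      by (simp add: sum.Plus comp_def sum_subtractf sum_distrib_left[symmetric] algebra_simps)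
  qed
  have pair: "?f j = sinh (T*d) * ((\<Prod>r\<in>?J. sinh (T * a j - v r))
        / ((\<Prod>s\<in>?P-{j}. sinh (T * a j - T * a s)) * (sinh (T*d) * (\<Prod>s\<in>?P-{j}. sinh (T * a j - T * a s + T*d))))
      + (\<Prod>r\<in>?J. sinh (T * a j - T*d - v r))
        / ((- sinh (T*d) * (\<Prod>s\<in>?P-{j}. sinh (T * a j - T * a s - T*d))) * (\<Prod>s\<in>?P-{j}. sinh (T * a j - T * a s))))"
    for j
  proof -
    have combine: "(nb / d1) * (nc / d2) - (nc' / d1) * (nb' / d3)
        = sinh (T*d) * ((nb * nc) / (d1 * (sinh (T*d) * d2)) + (nb' * nc') / ((- sinh (T*d) * d3) * d1))"
      for nb nc nb' nc' d1 d2 d3 :: complex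
      using g3 by (simp add: divide_inverse inverse_mult_distrib algebra_simps)
    have "(\<Prod>r\<in>?J. sinh (T * a j - v r))
        = (\<Prod>r\<in>{1..p'}. sinh (T*(a j - b r + d/2))) * (\<Prod>r\<in>{1..p''}. sinh (T*(a j + d - c r + - d/2)))"
      "(\<Prod>r\<in>?J. sinh (T * a j - T*d - v r))
        = (\<Prod>r\<in>{1..p'}. sinh (T*(a j + - d - b r + d/2))) * (\<Prod>r\<in>{1..p''}. sinh (T*(a j - c r + - d/2)))"
      unfolding v_def by (simp_all add: prod.Plus comp_def algebra_simps)
    moreover have "(\<Prod>s\<in>?P-{j}. sinh (T * a j - T * a s)) = (\<Prod>s\<in>?P-{j}. sinh (T*(a j - a s)))"
      "(\<Prod>s\<in>?P-{j}. sinh (T * a j - T * a s + T*d)) = (\<Prod>s\<in>?P-{j}. sinh (T*(a j + d - a s)))"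
      "(\<Prod>s\<in>?P-{j}. sinh (T * a j - T * a s - T*d)) = (\<Prod>s\<in>?P-{j}. sinh (T*(a j + - d - a s)))"
      by (simp_all add: algebra_simps)
    ultimately show ?thesis by (simp only: combine)
  qed
  show ?thesis
    unfolding pair sum_distrib_left[of "sinh (T*d)", symmetric] partial exponent ..
qed

section \<open>Serre relations\<close>

lemma sum_sum_antisym_eq_0:
  fixes g :: "'a \<Rightarrow> 'a \<Rightarrow> 'b::field_char_0"
  assumes "\<And>j k. j \<in> A \<Longrightarrow> k \<in> A \<Longrightarrow> g j k + g k j = 0"
  shows "(\<Sum>j\<in>A. \<Sum>k\<in>A. g j k) = 0"
proof -
  have "2 * (\<Sum>j\<in>A. \<Sum>k\<in>A. g j k) = (\<Sum>j\<in>A. \<Sum>k\<in>A. g j k) + (\<Sum>j\<in>A. \<Sum>k\<in>A. g k j)"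
    by (subst (2) sum.swap) simp
  also have "\<dots> = (\<Sum>j\<in>A. \<Sum>k\<in>A. g j k + g k j)" by (simp add: sum.distrib)
  also have "\<dots> = 0" using assms by simp
  finally show ?thesis by simp
qed

lemma sinh_serre_pair:
  fixes u v h :: complex
  assumes "sinh (u - v) \<noteq> 0" "sinh (v - u - 2*h) \<noteq> 0" "sinh (u - v - 2*h) \<noteq> 0"
  shows "(sinh (u+h) * sinh (v+h) - (exp (2*h) + exp (-(2*h))) * sinh (u+h) * sinh (v-h)
            + sinh (u-h) * sinh (v-h)) / (sinh (u-v) * sinh (v-u-2*h))
       + (sinh (v+h) * sinh (u+h) - (exp (2*h) + exp (-(2*h))) * sinh (v+h) * sinh (u-h)
            + sinh (v-h) * sinh (u-h)) / (sinh (v-u) * sinh (u-v-2*h)) = 0"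
proof -
  have cancel: "X / (a * b) + Y / (- a * c) = 0"
    if "X * c = Y * b" "a \<noteq> 0" "b \<noteq> 0" "c \<noteq> 0" for X Y a b c :: complex
    using that by (simp add: field_simps)
  have "sinh (v - u) = - sinh (u - v)" by (metis minus_diff_eq sinh_minus)
  then show ?thesis using assms by (simp only:) (rule cancel[OF sinh_serre_identity])
qed

text \<open>The Serre terms of a symmetric pair, with each coefficient written through its factors that
  depend on the shifted variables: \<open>aj, ak\<close> are \<open>\<gamma>\<^sub>p\<^sub>j, \<gamma>\<^sub>p\<^sub>k\<close> and \<open>b\<close> is \<open>\<gamma>\<^sub>p\<^sub>'\<^sub>l\<close>
  (below, for the second Serre relation, \<open>bl, bm\<close> are \<open>\<gamma>\<^sub>p\<^sub>'\<^sub>l, \<gamma>\<^sub>p\<^sub>'\<^sub>m\<close>).\<close>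
lemma serre_I_pair_cancel:
  fixes T d aj ak b n1 n2 e1 e2 Q :: complex
  assumes nz: "sinh (T*(aj - ak)) \<noteq> 0" "sinh (T*(ak - (aj + d))) \<noteq> 0" "sinh (T*(aj - (ak + d))) \<noteq> 0"
    "e1 \<noteq> 0" "e2 \<noteq> 0"
    and Q: "Q = exp (T*d) + exp (-(T*d))"
  shows "(n1 * sinh (T*(aj - b + d/2)) / (e1 * sinh (T*(aj - ak)))) * (n2 * sinh (T*(ak - b + d/2)) / (e2 * sinh (T*(ak - (aj + d)))))
   - Q * ((n1 * sinh (T*(aj - b + d/2)) / (e1 * sinh (T*(aj - ak)))) * (n2 * sinh (T*(ak - (b + d) + d/2)) / (e2 * sinh (T*(ak - (aj + d))))))
   + (n1 * sinh (T*(aj - (b + d) + d/2)) / (e1 * sinh (T*(aj - ak)))) * (n2 * sinh (T*(ak - (b + d) + d/2)) / (e2 * sinh (T*(ak - (aj + d)))))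
   + ((n2 * sinh (T*(ak - b + d/2)) / (e2 * sinh (T*(ak - aj)))) * (n1 * sinh (T*(aj - b + d/2)) / (e1 * sinh (T*(aj - (ak + d)))))
   - Q * ((n2 * sinh (T*(ak - b + d/2)) / (e2 * sinh (T*(ak - aj)))) * (n1 * sinh (T*(aj - (b + d) + d/2)) / (e1 * sinh (T*(aj - (ak + d))))))
   + (n2 * sinh (T*(ak - (b + d) + d/2)) / (e2 * sinh (T*(ak - aj)))) * (n1 * sinh (T*(aj - (b + d) + d/2)) / (e1 * sinh (T*(aj - (ak + d))))))
   = 0"
proof -
  define u v h where "u = T*(aj - b)" and "v = T*(ak - b)" and "h = T*d/2"
  have a: "T*(aj - b + d/2) = u + h" "T*(ak - b + d/2) = v + h" "T*(ak - (b + d) + d/2) = v - h"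
    "T*(aj - (b + d) + d/2) = u - h" "T*(aj - ak) = u - v" "T*(ak - (aj + d)) = v - u - 2*h"
    "T*(ak - aj) = v - u" "T*(aj - (ak + d)) = u - v - 2*h" "T*d = 2*h"
    unfolding u_def v_def h_def by (simp_all add: algebra_simps)
  have nz': "sinh (u - v) \<noteq> 0" "sinh (v - u) \<noteq> 0" "sinh (v - u - 2*h) \<noteq> 0" "sinh (u - v - 2*h) \<noteq> 0"
    using nz unfolding a by (auto simp: sinh_minus[of "u - v", simplified])
  define Q' where "Q' = exp (2*h) + exp (-(2*h))"
  define X Y where
    "X = sinh (u+h) * sinh (v+h) - Q' * sinh (u+h) * sinh (v-h) + sinh (u-h) * sinh (v-h)" and
    "Y = sinh (v+h) * sinh (u+h) - Q' * sinh (v+h) * sinh (u-h) + sinh (v-h) * sinh (u-h)"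
  have "(n1 * sinh (u + h) / (e1 * sinh (u - v))) * (n2 * sinh (v + h) / (e2 * sinh (v - u - 2*h)))
   - Q' * ((n1 * sinh (u + h) / (e1 * sinh (u - v))) * (n2 * sinh (v - h) / (e2 * sinh (v - u - 2*h))))
   + (n1 * sinh (u - h) / (e1 * sinh (u - v))) * (n2 * sinh (v - h) / (e2 * sinh (v - u - 2*h)))
   + ((n2 * sinh (v + h) / (e2 * sinh (v - u))) * (n1 * sinh (u + h) / (e1 * sinh (u - v - 2*h)))
   - Q' * ((n2 * sinh (v + h) / (e2 * sinh (v - u))) * (n1 * sinh (u - h) / (e1 * sinh (u - v - 2*h))))
   + (n2 * sinh (v - h) / (e2 * sinh (v - u))) * (n1 * sinh (u - h) / (e1 * sinh (u - v - 2*h))))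
   = n1 * n2 / (e1 * e2) * (X / (sinh (u-v) * sinh (v-u-2*h)) + Y / (sinh (v-u) * sinh (u-v-2*h)))"
    unfolding X_def Y_def using nz' nz(4,5) by (simp add: field_simps)
  also have "\<dots> = 0"
    unfolding X_def Y_def Q'_def using sinh_serre_pair[OF nz'(1,3,4)] by simp
  finally show ?thesis unfolding a Q Q'_def .
qed

lemma serre_I_diagonal_cancel:
  fixes T d aj b n1 n2 e1 e2 Q :: complex
  assumes Q: "Q = exp (T*d) + exp (-(T*d))"
  shows "(n1 * sinh (T*(aj - b + d/2)) / e1) * (n2 * sinh (T*(aj + d - b + d/2)) / e2)
   - Q * ((n1 * sinh (T*(aj - b + d/2)) / e1) * (n2 * sinh (T*(aj + d - (b + d) + d/2)) / e2))
   + (n1 * sinh (T*(aj - (b + d) + d/2)) / e1) * (n2 * sinh (T*(aj + d - (b + d) + d/2)) / e2) = 0"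
proof -
  define w h where "w = T*(aj - b + d/2)" and "h = T*d/2"
  have a: "T*(aj + d - b + d/2) = w + 2*h" "T*(aj + d - (b + d) + d/2) = w"
    "T*(aj - (b + d) + d/2) = w - 2*h" "T*d = 2*h"
    unfolding w_def h_def by (simp_all add: algebra_simps)
  have "(n1 * sinh w / e1) * (n2 * sinh (w + 2*h) / e2) - Q * ((n1 * sinh w / e1) * (n2 * sinh w / e2))
      + (n1 * sinh (w - 2*h) / e1) * (n2 * sinh w / e2)
    = n1 * n2 / (e1 * e2) * sinh w * (sinh (w + 2*h) + sinh (w - 2*h) - Q * sinh w)"
    by (simp add: algebra_simps)
  also have "\<dots> = 0" unfolding sinh_add_diff_eq Q a by simp
  finally show ?thesis unfolding a w_def[symmetric] .
qed

lemma serre_II_pair_cancel: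
  fixes T d aj bl bm n e nb1 nb2 eb1 eb2 Q :: complex
  assumes nz: "sinh (T*(bl - bm)) \<noteq> 0" "sinh (T*(bm - (bl + d))) \<noteq> 0" "sinh (T*(bl - (bm + d))) \<noteq> 0"
    "eb1 \<noteq> 0" "eb2 \<noteq> 0" "e \<noteq> 0"
    and Q: "Q = exp (T*d) + exp (-(T*d))"
  shows "(nb1 / (eb1 * sinh (T*(bl - bm)))) * (nb2 / (eb2 * sinh (T*(bm - (bl + d))))) *
     ((n * sinh (T*(aj - (bm + d) + d/2))) * sinh (T*(aj - (bl + d) + d/2)) / e
      - Q * ((n * sinh (T*(aj - bm + d/2))) * sinh (T*(aj - (bl + d) + d/2)) / e)
      + (n * sinh (T*(aj - bm + d/2))) * sinh (T*(aj - bl + d/2)) / e)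
   + (nb2 / (eb2 * sinh (T*(bm - bl)))) * (nb1 / (eb1 * sinh (T*(bl - (bm + d))))) *
     ((n * sinh (T*(aj - (bm + d) + d/2))) * sinh (T*(aj - (bl + d) + d/2)) / e
      - Q * ((n * sinh (T*(aj - (bm + d) + d/2))) * sinh (T*(aj - bl + d/2)) / e)
      + (n * sinh (T*(aj - bm + d/2))) * sinh (T*(aj - bl + d/2)) / e)
   = 0"
proof -
  define u v h where "u = T*(aj - bl)" and "v = T*(aj - bm)" and "h = T*d/2"
  have a: "T*(aj - bl + d/2) = u + h" "T*(aj - bm + d/2) = v + h" "T*(aj - (bm + d) + d/2) = v - h"
    "T*(aj - (bl + d) + d/2) = u - h" "T*(bm - bl) = u - v" "T*(bl - (bm + d)) = v - u - 2*h"
    "T*(bl - bm) = v - u" "T*(bm - (bl + d)) = u - v - 2*h" "T*d = 2*h"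
    unfolding u_def v_def h_def by (simp_all add: algebra_simps)
  have nz': "sinh (u - v) \<noteq> 0" "sinh (v - u) \<noteq> 0" "sinh (v - u - 2*h) \<noteq> 0" "sinh (u - v - 2*h) \<noteq> 0"
    using nz unfolding a by (auto simp: sinh_minus[of "v - u", simplified])
  define Q' where "Q' = exp (2*h) + exp (-(2*h))"
  define X Y where
    "X = sinh (u+h) * sinh (v+h) - Q' * sinh (u+h) * sinh (v-h) + sinh (u-h) * sinh (v-h)" and
    "Y = sinh (v+h) * sinh (u+h) - Q' * sinh (v+h) * sinh (u-h) + sinh (v-h) * sinh (u-h)"
  have "(nb1 / (eb1 * sinh (v - u))) * (nb2 / (eb2 * sinh (u - v - 2*h))) *
     ((n * sinh (v - h)) * sinh (u - h) / e
      - Q' * ((n * sinh (v + h)) * sinh (u - h) / e)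
      + (n * sinh (v + h)) * sinh (u + h) / e)
   + (nb2 / (eb2 * sinh (u - v))) * (nb1 / (eb1 * sinh (v - u - 2*h))) *
     ((n * sinh (v - h)) * sinh (u - h) / e
      - Q' * ((n * sinh (v - h)) * sinh (u + h) / e)
      + (n * sinh (v + h)) * sinh (u + h) / e)
   = nb1 * nb2 * n / (eb1 * eb2 * e) * (X / (sinh (u-v) * sinh (v-u-2*h)) + Y / (sinh (v-u) * sinh (u-v-2*h)))"
    unfolding X_def Y_def using nz' nz(4,5,6) by (simp add: field_simps)
  also have "\<dots> = 0"
    unfolding X_def Y_def Q'_def using sinh_serre_pair[OF nz'(1,3,4)] by simp
  finally show ?thesis unfolding a Q Q'_def .
qed

lemma serre_II_diagonal_cancel:
  fixes T d aj bl n e Q :: complex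
  assumes Q: "Q = exp (T*d) + exp (-(T*d))"
  shows "n * sinh (T*(aj - (bl + d + d) + d/2)) / e - Q * (n * sinh (T*(aj - (bl + d) + d/2)) / e)
     + n * sinh (T*(aj - bl + d/2)) / e = 0"
proof -
  define w h where "w = T*(aj - (bl + d) + d/2)" and "h = T*d/2"
  have a: "T*(aj - (bl + d + d) + d/2) = w - 2*h" "T*(aj - bl + d/2) = w + 2*h" "T*d = 2*h"
    unfolding w_def h_def by (simp_all add: algebra_simps)
  have "n * sinh (w - 2*h) / e - Q * (n * sinh w / e) + n * sinh (w + 2*h) / e
      = n / e * (sinh (w + 2*h) + sinh (w - 2*h) - Q * sinh w)"
    by (simp add: algebra_simps)
  also have "\<dots> = 0" unfolding sinh_add_diff_eq Q a by simp
  finally show ?thesis unfolding a w_def[symmetric] .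
qed

definition row_nondegenerate :: "nat \<Rightarrow> (nat \<Rightarrow> complex) \<Rightarrow> complex \<Rightarrow> complex \<Rightarrow> point \<Rightarrow> nat \<Rightarrow> bool" where
  "row_nondegenerate N gN T d x p \<longleftrightarrow> (\<forall>j\<in>{1..p}. \<forall>k\<in>{1..p}. j \<noteq> k \<longrightarrow>
     sinh (T*(gam N gN x p j - gam N gN x p k)) \<noteq> 0 \<and>
     sinh (T*(gam N gN x p j - (gam N gN x p k + d))) \<noteq> 0)"

lemma row_nondegenerateD:
  assumes "row_nondegenerate N gN T d x p" "j \<in> {1..p}" "k \<in> {1..p}" "j \<noteq> k"
  shows "sinh (T*(gam N gN x p j - gam N gN x p k)) \<noteq> 0"
    and "sinh (T*(gam N gN x p j - (gam N gN x p k + d))) \<noteq> 0"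
  using assms unfolding row_nondegenerate_def by blast+

lemma row_coeff_serre_I_diagonal:
  fixes x :: point and gN :: "nat \<Rightarrow> complex"
  assumes pN: "p \<noteq> N" "p' \<noteq> N" and pp: "p \<noteq> p'"
    and Q: "Q = exp (T*d) + exp (-(T*d))" and l: "l \<in> {1..p'}"
  defines "A \<equiv> row_coeff N gN T d p p'"
  shows "A x j * A (shift x p j d) j - Q * (A x j * A (shift (shift x p j d) p' l d) j)
           + A (shift x p' l d) j * A (shift (shift x p j d) p' l d) j = 0"
proof -
  define aj b where "aj = gam N gN x p j" and "b = gam N gN x p' l"
  note simps = row_coeff_split_num gam_shift_self gam_shift_other coeff_num_but_shift coeff_den_shift
  have f1: "A x j = coeff_num_but N gN T d p p' x j l * sinh (T * (aj - b + d/2)) / coeff_den N gN T p x j"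
    unfolding A_def aj_def b_def using l by (rule row_coeff_split_num)
  have f2: "A (shift x p j d) j = coeff_num_but N gN T d p p' (shift x p j d) j l
      * sinh (T * (aj + d - b + d/2)) / coeff_den N gN T p (shift x p j d) j"
    unfolding A_def aj_def b_def using l pN pp by (simp add: simps)
  have f3: "A (shift (shift x p j d) p' l d) j = coeff_num_but N gN T d p p' (shift x p j d) j l
      * sinh (T * (aj + d - (b + d) + d/2)) / coeff_den N gN T p (shift x p j d) j"
    unfolding A_def aj_def b_def using l pN pp by (simp add: simps)
  have f4: "A (shift x p' l d) j = coeff_num_but N gN T d p p' x j l
      * sinh (T * (aj - (b + d) + d/2)) / coeff_den N gN T p x j"
    unfolding A_def aj_def b_def using l pN pp by (simp add: simps)
  show ?thesis unfolding f1 f2 f3 f4 by (rule serre_I_diagonal_cancel[OF Q])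
qed

lemma row_coeff_serre_I_pair:
  fixes x :: point
  assumes pN: "p \<noteq> N" "p' \<noteq> N" and pp: "p \<noteq> p'"
    and Q: "Q = exp (T*d) + exp (-(T*d))"
    and nd: "row_nondegenerate N gN T d x p"
    and j: "j \<in> {1..p}" and k: "k \<in> {1..p}" and jk: "j \<noteq> k" and l: "l \<in> {1..p'}"
  defines "A \<equiv> row_coeff N gN T d p p'"
  shows "(A x j * A (shift x p j d) k - Q * (A x j * A (shift (shift x p j d) p' l d) k)
           + A (shift x p' l d) j * A (shift (shift x p j d) p' l d) k)
       + (A x k * A (shift x p k d) j - Q * (A x k * A (shift (shift x p k d) p' l d) j)
           + A (shift x p' l d) k * A (shift (shift x p k d) p' l d) j) = 0"
proof -
  define aj ak b where "aj = gam N gN x p j" and "ak = gam N gN x p k" and "b = gam N gN x p' l"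
  note simps = row_coeff_split_num_den gam_shift_self gam_shift_other coeff_num_but_shift coeff_den_but_shift
  note facts = l pN pp j k jk not_sym[OF jk]
  have f1: "A x j = coeff_num_but N gN T d p p' x j l * sinh (T*(aj - b + d/2))
      / (coeff_den_but N gN T p x j k * sinh (T*(aj - ak)))"
    unfolding A_def aj_def ak_def b_def using facts by (simp add: simps)
  have f2: "A (shift x p j d) k = coeff_num_but N gN T d p p' x k l * sinh (T*(ak - b + d/2))
      / (coeff_den_but N gN T p x k j * sinh (T*(ak - (aj + d))))"
    unfolding A_def aj_def ak_def b_def using facts by (simp add: simps)
  have f3: "A (shift (shift x p j d) p' l d) k = coeff_num_but N gN T d p p' x k l * sinh (T*(ak - (b + d) + d/2))
      / (coeff_den_but N gN T p x k j * sinh (T*(ak - (aj + d))))"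
    unfolding A_def aj_def ak_def b_def using facts by (simp add: simps)
  have f4: "A (shift x p' l d) j = coeff_num_but N gN T d p p' x j l * sinh (T*(aj - (b + d) + d/2))
      / (coeff_den_but N gN T p x j k * sinh (T*(aj - ak)))"
    unfolding A_def aj_def ak_def b_def using facts by (simp add: simps)
  have f5: "A x k = coeff_num_but N gN T d p p' x k l * sinh (T*(ak - b + d/2))
      / (coeff_den_but N gN T p x k j * sinh (T*(ak - aj)))"
    unfolding A_def aj_def ak_def b_def using facts by (simp add: simps)
  have f6: "A (shift x p k d) j = coeff_num_but N gN T d p p' x j l * sinh (T*(aj - b + d/2))
      / (coeff_den_but N gN T p x j k * sinh (T*(aj - (ak + d))))"
    unfolding A_def aj_def ak_def b_def using facts by (simp add: simps)
  have f7: "A (shift (shift x p k d) p' l d) j = coeff_num_but N gN T d p p' x j l * sinh (T*(aj - (b + d) + d/2))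
      / (coeff_den_but N gN T p x j k * sinh (T*(aj - (ak + d))))"
    unfolding A_def aj_def ak_def b_def using facts by (simp add: simps)
  have f8: "A (shift x p' l d) k = coeff_num_but N gN T d p p' x k l * sinh (T*(ak - (b + d) + d/2))
      / (coeff_den_but N gN T p x k j * sinh (T*(ak - aj)))"
    unfolding A_def aj_def ak_def b_def using facts by (simp add: simps)
  have "coeff_den_but N gN T p x j k \<noteq> 0" "coeff_den_but N gN T p x k j \<noteq> 0"
    using row_nondegenerateD(1)[OF nd] j k by (auto intro!: coeff_den_but_nonzero)
  then show ?thesis unfolding f1 f2 f3 f4 f5 f6 f7 f8
    using row_nondegenerateD[OF nd j k jk] row_nondegenerateD(2)[OF nd k j not_sym[OF jk]]
    unfolding aj_def ak_def by (intro serre_I_pair_cancel[OF _ _ _ _ _ Q])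
qed

lemma row_op_serre_I_expansion:
  fixes N :: nat and gN :: "nat \<Rightarrow> complex" and T d :: complex and x :: point
  assumes pp: "p \<noteq> p'" "p \<noteq> p''"
  defines "A \<equiv> row_coeff N gN T d p p'" and "B \<equiv> row_coeff N gN T d p' p''"
  shows "row_op N gN T d C p p' (row_op N gN T d C p p' (row_op N gN T d C' p' p'' f)) x
       - Q * row_op N gN T d C p p' (row_op N gN T d C' p' p'' (row_op N gN T d C p p' f)) x
       + row_op N gN T d C' p' p'' (row_op N gN T d C p p' (row_op N gN T d C p p' f)) x
     = (\<Sum>j=1..p. \<Sum>k=1..p. \<Sum>l=1..p'. C*C*C' * B x l *
          (A x j * A (shift x p j d) k - Q * (A x j * A (shift (shift x p j d) p' l d) k)
           + A (shift x p' l d) j * A (shift (shift x p j d) p' l d) k)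
          * f (shift (shift (shift x p j d) p k d) p' l d))"
proof -
  define P where "P j k l = shift (shift (shift x p j d) p k d) p' l d" for j k l
  have B_shift: "B (shift y p i e) l = B y l" for y i e l
    unfolding B_def using pp by (simp add: row_coeff_shift_other_row)
  have 1: "row_op N gN T d C p p' (row_op N gN T d C p p' (row_op N gN T d C' p' p'' f)) x =
     (\<Sum>j=1..p. \<Sum>k=1..p. \<Sum>l=1..p'. C*C*C' * (A x j * A (shift x p j d) k * B x l) * f (P j k l))"
    unfolding row_op_def P_def A_def[symmetric] B_def[symmetric] B_shift
    by (simp add: sum_distrib_left mult_ac)
  have "row_op N gN T d C p p' (row_op N gN T d C' p' p'' (row_op N gN T d C p p' f)) x =
     (\<Sum>j=1..p. \<Sum>l=1..p'. \<Sum>k=1..p. C*C*C' * (A x j * B x l * A (shift (shift x p j d) p' l d) k) * f (P j k l))"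
    unfolding row_op_def P_def A_def[symmetric] B_def[symmetric] B_shift
    by (simp add: sum_distrib_left mult_ac shift_commute[of "shift x p j d" p' l d p k d for j l k])
  also have "\<dots> = (\<Sum>j=1..p. \<Sum>k=1..p. \<Sum>l=1..p'. C*C*C' * (A x j * B x l * A (shift (shift x p j d) p' l d) k) * f (P j k l))"
    by (rule sum.cong[OF refl], rule sum.swap)
  finally have 2: "row_op N gN T d C p p' (row_op N gN T d C' p' p'' (row_op N gN T d C p p' f)) x = \<dots>" .
  have "row_op N gN T d C' p' p'' (row_op N gN T d C p p' (row_op N gN T d C p p' f)) x =
     (\<Sum>l=1..p'. \<Sum>j=1..p. \<Sum>k=1..p. C*C*C' * (B x l * A (shift x p' l d) j * A (shift (shift x p j d) p' l d) k) * f (P j k l))"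
    unfolding row_op_def P_def A_def[symmetric] B_def[symmetric]
    by (simp add: sum_distrib_left mult_ac shift_commute[of x p' l d p j d for j l]
          shift_commute[of "shift x p j d" p' l d p k d for j l k])
  also have "\<dots> = (\<Sum>j=1..p. \<Sum>k=1..p. \<Sum>l=1..p'. C*C*C' * (B x l * A (shift x p' l d) j * A (shift (shift x p j d) p' l d) k) * f (P j k l))"
    by (subst sum.swap) (rule sum.cong[OF refl], rule sum.swap)
  finally have 3: "row_op N gN T d C' p' p'' (row_op N gN T d C p p' (row_op N gN T d C p p' f)) x = \<dots>" .
  show ?thesis
    unfolding 1 2 3 P_def[symmetric]
    by (simp add: sum_distrib_left sum_subtractf[symmetric] sum.distrib[symmetric] algebra_simps)
qed

text \<open>The terms of the Serre combination are indexed by the two shifted variables \<open>j, k\<close> of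
  row \<open>p\<close> and one of row \<open>p'\<close>; the terms \<open>(j, k)\<close> and \<open>(k, j)\<close> hit the same point and cancel.\<close>
lemma row_op_serre_I:
  fixes x :: point
  assumes pN: "p \<noteq> N" "p' \<noteq> N" and pp: "p \<noteq> p'" "p \<noteq> p''"
    and Q: "Q = exp (T*d) + exp (-(T*d))"
    and nd: "row_nondegenerate N gN T d x p"
  shows "row_op N gN T d C p p' (row_op N gN T d C p p' (row_op N gN T d C' p' p'' f)) x
       - Q * row_op N gN T d C p p' (row_op N gN T d C' p' p'' (row_op N gN T d C p p' f)) x
       + row_op N gN T d C' p' p'' (row_op N gN T d C p p' (row_op N gN T d C p p' f)) x = 0"
proof -
  define A where "A = row_coeff N gN T d p p'"
  define P where "P j k l = shift (shift (shift x p j d) p k d) p' l d" for j k l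
  define H where "H j k l = A x j * A (shift x p j d) k - Q * (A x j * A (shift (shift x p j d) p' l d) k)
           + A (shift x p' l d) j * A (shift (shift x p j d) p' l d) k" for j k l
  define g where "g j k = (\<Sum>l=1..p'. C*C*C' * row_coeff N gN T d p' p'' x l * H j k l * f (P j k l))" for j k
  have P_sym: "P k j l = P j k l" for j k l
    unfolding P_def by (simp add: shift_commute[of x p k d p j d])
  have "(\<Sum>j=1..p. \<Sum>k=1..p. g j k) = 0"
  proof (rule sum_sum_antisym_eq_0)
    fix j k assume jk: "j \<in> {1..p}" "k \<in> {1..p}"
    have "H j k l + H k j l = 0" if l: "l \<in> {1..p'}" for l
    proof (cases "j = k")
      case True
      then show ?thesis unfolding H_def A_def using row_coeff_serre_I_diagonal[OF pN pp(1) Q l] by simp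
    next
      case False
      show ?thesis unfolding H_def A_def using row_coeff_serre_I_pair[OF pN pp(1) Q nd jk False l] .
    qed
    then show "g j k + g k j = 0"
      unfolding g_def P_sym[of k j] by (simp add: sum.distrib[symmetric] distrib_left[symmetric]
        distrib_right[symmetric] mult.assoc[symmetric])
  qed
  then show ?thesis
    using row_op_serre_I_expansion[OF pp, where C=C and C'=C' and Q=Q and f=f and x=x]
    unfolding g_def H_def A_def P_def by (simp add: mult.assoc)
qed

lemma row_coeff_serre_II_diagonal:
  fixes x :: point and gN :: "nat \<Rightarrow> complex"
  assumes pN: "p \<noteq> N" "p' \<noteq> N" and pp: "p \<noteq> p'"
    and Q: "Q = exp (T*d) + exp (-(T*d))" and l: "l \<in> {1..p'}"
  defines "A \<equiv> row_coeff N gN T d p p'"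
  shows "A (shift (shift x p' l d) p' l d) j - Q * A (shift x p' l d) j + A x j = 0"
proof -
  define aj bl where "aj = gam N gN x p j" and "bl = gam N gN x p' l"
  note simps = row_coeff_split_num gam_shift_self gam_shift_other coeff_num_but_shift coeff_den_shift
  have f1: "A (shift (shift x p' l d) p' l d) j
      = coeff_num_but N gN T d p p' x j l * sinh (T * (aj - (bl + d + d) + d/2)) / coeff_den N gN T p x j"
    unfolding A_def aj_def bl_def using l pN pp by (simp add: simps)
  have f2: "A (shift x p' l d) j
      = coeff_num_but N gN T d p p' x j l * sinh (T * (aj - (bl + d) + d/2)) / coeff_den N gN T p x j"
    unfolding A_def aj_def bl_def using l pN pp by (simp add: simps)
  have f3: "A x j = coeff_num_but N gN T d p p' x j l * sinh (T * (aj - bl + d/2)) / coeff_den N gN T p x j"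
    unfolding A_def aj_def bl_def using l pN pp by (simp add: simps)
  show ?thesis unfolding f1 f2 f3 by (rule serre_II_diagonal_cancel[OF Q])
qed

lemma row_coeff_serre_II_pair:
  fixes x :: point
  assumes pN: "p \<noteq> N" "p' \<noteq> N" and pp: "p \<noteq> p'" "p'' \<noteq> p'"
    and Q: "Q = exp (T*d) + exp (-(T*d))"
    and nd: "row_nondegenerate N gN T d x p" "row_nondegenerate N gN T d x p'"
    and l: "l \<in> {1..p'}" and m: "m \<in> {1..p'}" and lm: "l \<noteq> m" and j: "j \<in> {1..p}"
  defines "A \<equiv> row_coeff N gN T d p p'" and "B \<equiv> row_coeff N gN T d p' p''"
  shows "B x l * B (shift x p' l d) m * (A (shift (shift x p' l d) p' m d) j - Q * A (shift x p' l d) j + A x j)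
       + B x m * B (shift x p' m d) l * (A (shift (shift x p' m d) p' l d) j - Q * A (shift x p' m d) j + A x j) = 0"
proof -
  define aj bl bm where "aj = gam N gN x p j" and "bl = gam N gN x p' l" and "bm = gam N gN x p' m"
  note simps = row_coeff_split_num2 row_coeff_split_den gam_shift_self gam_shift_other
    coeff_num_but2_shift coeff_den_shift coeff_num_shift coeff_den_but_shift
  note facts = l m lm not_sym[OF lm] pN pp
  have f1: "B x l = coeff_num N gN T d p' p'' x l / (coeff_den_but N gN T p' x l m * sinh (T * (bl - bm)))"
    unfolding B_def bl_def bm_def using facts by (simp add: simps)
  have f2: "B (shift x p' l d) m
      = coeff_num N gN T d p' p'' x m / (coeff_den_but N gN T p' x m l * sinh (T * (bm - (bl + d))))"
    unfolding B_def bl_def bm_def using facts by (simp add: simps)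
  have f3: "B x m = coeff_num N gN T d p' p'' x m / (coeff_den_but N gN T p' x m l * sinh (T * (bm - bl)))"
    unfolding B_def bl_def bm_def using facts by (simp add: simps)
  have f4: "B (shift x p' m d) l
      = coeff_num N gN T d p' p'' x l / (coeff_den_but N gN T p' x l m * sinh (T * (bl - (bm + d))))"
    unfolding B_def bl_def bm_def using facts by (simp add: simps)
  let ?n = "coeff_num_but2 N gN T d p p' x j l m" and ?e = "coeff_den N gN T p x j"
  have f5: "A (shift (shift x p' l d) p' m d) j
      = (?n * sinh (T*(aj - (bm + d) + d/2))) * sinh (T*(aj - (bl + d) + d/2)) / ?e"
    unfolding A_def aj_def bl_def bm_def using facts by (simp add: simps)
  have f6: "A (shift x p' l d) j = (?n * sinh (T*(aj - bm + d/2))) * sinh (T*(aj - (bl + d) + d/2)) / ?e"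
    unfolding A_def aj_def bl_def bm_def using facts by (simp add: simps)
  have f7: "A x j = (?n * sinh (T*(aj - bm + d/2))) * sinh (T*(aj - bl + d/2)) / ?e"
    unfolding A_def aj_def bl_def bm_def using facts by (simp add: simps)
  have f8: "A (shift (shift x p' m d) p' l d) j
      = (?n * sinh (T*(aj - (bm + d) + d/2))) * sinh (T*(aj - (bl + d) + d/2)) / ?e"
    unfolding A_def aj_def bl_def bm_def using facts by (simp add: simps)
  have f9: "A (shift x p' m d) j = (?n * sinh (T*(aj - (bm + d) + d/2))) * sinh (T*(aj - bl + d/2)) / ?e"
    unfolding A_def aj_def bl_def bm_def using facts by (simp add: simps)
  have "coeff_den_but N gN T p' x l m \<noteq> 0" "coeff_den_but N gN T p' x m l \<noteq> 0" "?e \<noteq> 0"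
    using row_nondegenerateD(1)[OF nd(2)] row_nondegenerateD(1)[OF nd(1)] l m j
    by (auto intro!: coeff_den_but_nonzero coeff_den_nonzero)
  then show ?thesis unfolding f1 f2 f3 f4 f5 f6 f7 f8 f9
    using row_nondegenerateD[OF nd(2) l m lm] row_nondegenerateD(2)[OF nd(2) m l not_sym[OF lm]]
    unfolding bl_def bm_def by (intro serre_II_pair_cancel[OF _ _ _ _ _ _ Q])
qed

lemma row_op_serre_II_expansion:
  fixes N :: nat and gN :: "nat \<Rightarrow> complex" and T d :: complex and x :: point
  assumes pp: "p \<noteq> p'" "p \<noteq> p''"
  defines "A \<equiv> row_coeff N gN T d p p'" and "B \<equiv> row_coeff N gN T d p' p''"
  shows "row_op N gN T d C' p' p'' (row_op N gN T d C' p' p'' (row_op N gN T d C p p' f)) x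
       - Q * row_op N gN T d C' p' p'' (row_op N gN T d C p p' (row_op N gN T d C' p' p'' f)) x
       + row_op N gN T d C p p' (row_op N gN T d C' p' p'' (row_op N gN T d C' p' p'' f)) x
     = (\<Sum>l=1..p'. \<Sum>m=1..p'. \<Sum>j=1..p. C*C'*C' * B x l * B (shift x p' l d) m *
          (A (shift (shift x p' l d) p' m d) j - Q * A (shift x p' l d) j + A x j)
          * f (shift (shift (shift x p' l d) p' m d) p j d))"
proof -
  define P where "P l m j = shift (shift (shift x p' l d) p' m d) p j d" for l m j
  have B_shift: "B (shift y p i e) l = B y l" for y i e l
    unfolding B_def using pp by (simp add: row_coeff_shift_other_row)
  have 1: "row_op N gN T d C' p' p'' (row_op N gN T d C' p' p'' (row_op N gN T d C p p' f)) x =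
     (\<Sum>l=1..p'. \<Sum>m=1..p'. \<Sum>j=1..p. C*C'*C' * (B x l * B (shift x p' l d) m * A (shift (shift x p' l d) p' m d) j) * f (P l m j))"
    unfolding row_op_def P_def A_def[symmetric] B_def[symmetric]
    by (simp add: sum_distrib_left mult_ac)
  have "row_op N gN T d C' p' p'' (row_op N gN T d C p p' (row_op N gN T d C' p' p'' f)) x =
     (\<Sum>l=1..p'. \<Sum>j=1..p. \<Sum>m=1..p'. C*C'*C' * (B x l * B (shift x p' l d) m * A (shift x p' l d) j) * f (P l m j))"
    unfolding row_op_def P_def A_def[symmetric] B_def[symmetric] B_shift
    by (simp add: sum_distrib_left mult_ac shift_commute[of "shift x p' l d" p j d p' m d for j l m])
  also have "\<dots> = (\<Sum>l=1..p'. \<Sum>m=1..p'. \<Sum>j=1..p. C*C'*C' * (B x l * B (shift x p' l d) m * A (shift x p' l d) j) * f (P l m j))"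
    by (rule sum.cong[OF refl], rule sum.swap)
  finally have 2: "row_op N gN T d C' p' p'' (row_op N gN T d C p p' (row_op N gN T d C' p' p'' f)) x = \<dots>" .
  have "row_op N gN T d C p p' (row_op N gN T d C' p' p'' (row_op N gN T d C' p' p'' f)) x =
     (\<Sum>j=1..p. \<Sum>l=1..p'. \<Sum>m=1..p'. C*C'*C' * (B x l * B (shift x p' l d) m * A x j) * f (P l m j))"
    unfolding row_op_def P_def A_def[symmetric] B_def[symmetric]
      shift_commute[of x p j d p' l d for j l]
      shift_commute[of "shift x p' l d" p j d p' m d for j l m] B_shift
    by (simp add: sum_distrib_left mult_ac)
  also have "\<dots> = (\<Sum>l=1..p'. \<Sum>m=1..p'. \<Sum>j=1..p. C*C'*C' * (B x l * B (shift x p' l d) m * A x j) * f (P l m j))"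
    by (subst sum.swap) (rule sum.cong[OF refl], rule sum.swap)
  finally have 3: "row_op N gN T d C p p' (row_op N gN T d C' p' p'' (row_op N gN T d C' p' p'' f)) x = \<dots>" .
  show ?thesis
    unfolding 1 2 3 P_def[symmetric]
    by (simp add: sum_distrib_left sum_subtractf[symmetric] sum.distrib[symmetric] algebra_simps)
qed

lemma row_op_serre_II:
  fixes x :: point
  assumes pN: "p \<noteq> N" "p' \<noteq> N" and pp: "p \<noteq> p'" "p \<noteq> p''" "p'' \<noteq> p'"
    and Q: "Q = exp (T*d) + exp (-(T*d))"
    and nd: "row_nondegenerate N gN T d x p" "row_nondegenerate N gN T d x p'"
  shows "row_op N gN T d C' p' p'' (row_op N gN T d C' p' p'' (row_op N gN T d C p p' f)) x
       - Q * row_op N gN T d C' p' p'' (row_op N gN T d C p p' (row_op N gN T d C' p' p'' f)) x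
       + row_op N gN T d C p p' (row_op N gN T d C' p' p'' (row_op N gN T d C' p' p'' f)) x = 0"
proof -
  define A B where "A = row_coeff N gN T d p p'" and "B = row_coeff N gN T d p' p''"
  define P where "P l m j = shift (shift (shift x p' l d) p' m d) p j d" for l m j
  define K where "K l m j = B x l * B (shift x p' l d) m
      * (A (shift (shift x p' l d) p' m d) j - Q * A (shift x p' l d) j + A x j)" for l m j
  define g where "g l m = (\<Sum>j=1..p. C*C'*C' * K l m j * f (P l m j))" for l m
  have P_sym: "P m l j = P l m j" for l m j
    unfolding P_def by (simp add: shift_commute[of x p' m d p' l d])
  have "(\<Sum>l=1..p'. \<Sum>m=1..p'. g l m) = 0"
  proof (rule sum_sum_antisym_eq_0)
    fix l m assume lm: "l \<in> {1..p'}" "m \<in> {1..p'}"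
    have "K l m j + K m l j = 0" if j: "j \<in> {1..p}" for j
    proof (cases "l = m")
      case True
      then show ?thesis unfolding K_def A_def using row_coeff_serre_II_diagonal[OF pN pp(1) Q lm(1)] by simp
    next
      case False
      show ?thesis unfolding K_def A_def B_def using row_coeff_serre_II_pair[OF pN pp(1,3) Q nd lm False j] .
    qed
    then show "g l m + g m l = 0"
      unfolding g_def P_sym[of m l] by (simp add: sum.distrib[symmetric] distrib_left[symmetric]
        distrib_right[symmetric] mult.assoc[symmetric])
  qed
  then show ?thesis
    using row_op_serre_II_expansion[OF pp(1,2), where C=C and C'=C' and Q=Q and f=f and x=x]
    unfolding g_def K_def A_def B_def P_def by (simp add: mult.assoc)
qed

section \<open>The commutator of E and F\<close>

lemma row_coeff_adjacent_swap:
  assumes pN: "p \<noteq> N" "p' \<noteq> N" and pp: "p \<noteq> p'" and j: "j \<in> {1..p}" and k: "k \<in> {1..p'}"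
  shows "row_coeff N gN T d p p' x j * row_coeff N gN T (- d) p' p (shift x p j d) k
       = row_coeff N gN T (- d) p' p x k * row_coeff N gN T d p p' (shift x p' k (- d)) j"
proof -
  define aj bk where "aj = gam N gN x p j" and "bk = gam N gN x p' k"
  note simps = row_coeff_split_num gam_shift_self gam_shift_other coeff_num_but_shift coeff_den_shift
  let ?n1 = "coeff_num_but N gN T d p p' x j k" and ?e1 = "coeff_den N gN T p x j"
  let ?n2 = "coeff_num_but N gN T (- d) p' p x k j" and ?e2 = "coeff_den N gN T p' x k"
  have f1: "row_coeff N gN T d p p' x j = ?n1 * sinh (T*(aj - bk + d/2)) / ?e1"
    unfolding aj_def bk_def using j k pN pp by (simp add: simps)
  have f2: "row_coeff N gN T (- d) p' p (shift x p j d) k = ?n2 * sinh (T*(bk - (aj + d) + - d/2)) / ?e2"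
    unfolding aj_def bk_def using j k pN pp by (simp add: simps)
  have f3: "row_coeff N gN T (- d) p' p x k = ?n2 * sinh (T*(bk - aj + - d/2)) / ?e2"
    unfolding aj_def bk_def using j k pN pp by (simp add: simps)
  have f4: "row_coeff N gN T d p p' (shift x p' k (- d)) j = ?n1 * sinh (T*(aj - (bk + - d) + d/2)) / ?e1"
    unfolding aj_def bk_def using j k pN pp by (simp add: simps)
  have odd: "T*(bk - (aj + d) + - d/2) = - (T*(aj - (bk + - d) + d/2))"
    "T*(bk - aj + - d/2) = - (T*(aj - bk + d/2))"
    by (simp_all add: algebra_simps)
  show ?thesis unfolding f1 f2 f3 f4 odd sinh_minus by (simp add: algebra_simps)
qed

lemma row_op_commute_adjacent:
  assumes "p \<noteq> N" "p' \<noteq> N" "p \<noteq> p'"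
  shows "row_op N gN T d C p p' (row_op N gN T (- d) C' p' p f) x
       = row_op N gN T (- d) C' p' p (row_op N gN T d C p p' f) x"
proof -
  let ?A = "row_coeff N gN T d p p'" and ?B = "row_coeff N gN T (- d) p' p"
  have "row_op N gN T d C p p' (row_op N gN T (- d) C' p' p f) x =
      (\<Sum>j=1..p. \<Sum>k=1..p'. C * C' * (?A x j * ?B (shift x p j d) k) * f (shift (shift x p j d) p' k (- d)))"
    unfolding row_op_def by (simp add: sum_distrib_left mult_ac)
  also have "\<dots> = (\<Sum>j=1..p. \<Sum>k=1..p'. C * C' * (?B x k * ?A (shift x p' k (- d)) j)
      * f (shift (shift x p' k (- d)) p j d))"
    using assms
    by (intro sum.cong refl) (simp add: row_coeff_adjacent_swap shift_commute[of x p j d p' k "- d" for j k])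
  also have "\<dots> = row_op N gN T (- d) C' p' p (row_op N gN T d C p p' f) x"
    unfolding row_op_def by (subst sum.swap) (simp add: sum_distrib_left mult_ac)
  finally show ?thesis .
qed

lemma row_coeff_off_diagonal_swap:
  assumes pN: "p \<noteq> N" and pp: "p' \<noteq> p" "p'' \<noteq> p"
    and j: "j \<in> {1..p}" and k: "k \<in> {1..p}" and jk: "j \<noteq> k"
  shows "row_coeff N gN T d p p' x j * row_coeff N gN T (- d) p p'' (shift x p j d) k
       = row_coeff N gN T (- d) p p'' x k * row_coeff N gN T d p p' (shift x p k (- d)) j"
proof -
  define aj ak where "aj = gam N gN x p j" and "ak = gam N gN x p k"
  note simps = row_coeff_split_den gam_shift_self gam_shift_other coeff_num_shift coeff_den_but_shift
  let ?nA = "coeff_num N gN T d p p' x j" and ?eA = "coeff_den_but N gN T p x j k"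
  let ?nB = "coeff_num N gN T (- d) p p'' x k" and ?eB = "coeff_den_but N gN T p x k j"
  note facts = j k jk not_sym[OF jk] pN pp
  have f1: "row_coeff N gN T d p p' x j = ?nA / (?eA * sinh (T*(aj - ak)))"
    unfolding aj_def ak_def using facts by (simp add: simps)
  have f2: "row_coeff N gN T (- d) p p'' (shift x p j d) k = ?nB / (?eB * sinh (T*(ak - (aj + d))))"
    unfolding aj_def ak_def using facts by (simp add: simps)
  have f3: "row_coeff N gN T (- d) p p'' x k = ?nB / (?eB * sinh (T*(ak - aj)))"
    unfolding aj_def ak_def using facts by (simp add: simps)
  have f4: "row_coeff N gN T d p p' (shift x p k (- d)) j = ?nA / (?eA * sinh (T*(aj - (ak + - d))))"
    unfolding aj_def ak_def using facts by (simp add: simps)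
  have odd: "T*(ak - aj) = - (T*(aj - ak))" "T*(aj - (ak + - d)) = - (T*(ak - (aj + d)))"
    by (simp_all add: algebra_simps)
  show ?thesis unfolding f1 f2 f3 f4 odd sinh_minus by (simp add: divide_inverse algebra_simps)
qed

lemma row_op_commutator_same_row_diagonal:
  assumes pN: "p \<noteq> N" and pp: "p' \<noteq> p" "p'' \<noteq> p"
  shows "row_op N gN T d C p p' (row_op N gN T (- d) C' p p'' f) x
       - row_op N gN T (- d) C' p p'' (row_op N gN T d C p p' f) x
     = C * C' * (\<Sum>j=1..p. row_coeff N gN T d p p' x j * row_coeff N gN T (- d) p p'' (shift x p j d) j
         - row_coeff N gN T (- d) p p'' x j * row_coeff N gN T d p p' (shift x p j (- d)) j) * f x"
proof -
  define A B where "A = row_coeff N gN T d p p'" and "B = row_coeff N gN T (- d) p p''"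
  define P where "P j k = shift (shift x p j d) p k (- d)" for j k
  define t where "t j k = C * C' * (A x j * B (shift x p j d) k - B x k * A (shift x p k (- d)) j) * f (P j k)"
    for j k
  have EF: "row_op N gN T d C p p' (row_op N gN T (- d) C' p p'' f) x
      = (\<Sum>j=1..p. \<Sum>k=1..p. C * C' * (A x j * B (shift x p j d) k) * f (P j k))"
    unfolding row_op_def P_def A_def B_def by (simp add: sum_distrib_left mult_ac)
  have FE: "row_op N gN T (- d) C' p p'' (row_op N gN T d C p p' f) x
      = (\<Sum>k=1..p. \<Sum>j=1..p. C * C' * (B x k * A (shift x p k (- d)) j) * f (P j k))"
    unfolding row_op_def P_def A_def B_def
    by (simp add: sum_distrib_left mult_ac shift_commute[of x p k "- d" p j d for j k])
  have "row_op N gN T d C p p' (row_op N gN T (- d) C' p p'' f) x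
       - row_op N gN T (- d) C' p p'' (row_op N gN T d C p p' f) x = (\<Sum>j=1..p. \<Sum>k=1..p. t j k)"
    unfolding EF FE t_def by (subst (2) sum.swap) (simp add: sum_subtractf[symmetric] algebra_simps)
  also have "\<dots> = (\<Sum>j=1..p. t j j)"
  proof (intro sum.cong refl)
    fix j assume j: "j \<in> {1..p}"
    have "t j k = 0" if "k \<in> {1..p} - {j}" for k
      unfolding t_def A_def B_def using that j by (simp add: row_coeff_off_diagonal_swap[OF pN pp])
    then show "(\<Sum>k=1..p. t j k) = t j j"
      using j by (simp add: sum.remove)
  qed
  also have "\<dots> = C * C' * (\<Sum>j=1..p. A x j * B (shift x p j d) j - B x j * A (shift x p j (- d)) j) * f x"
    unfolding t_def P_def shift_shift_neg by (simp add: sum_distrib_left sum_distrib_right mult_ac)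
  finally show ?thesis unfolding A_def B_def .
qed

lemma row_coeff_shift_self:
  assumes "p \<noteq> N" "p' \<noteq> p"
  shows "row_coeff N gN T d p p' (shift x p j e) j =
    (\<Prod>r\<in>{1..p'}. sinh (T*(gam N gN x p j + e - gam N gN x p' r + d/2))) /
    (\<Prod>s\<in>{1..p}-{j}. sinh (T*(gam N gN x p j + e - gam N gN x p s)))"
  unfolding row_coeff_def using assms
  by (intro arg_cong2[where f="(/)"] prod.cong refl) (auto simp: gam_shift_self gam_shift_other)

lemma row_op_commutator_same_row:
  fixes x :: point
  assumes pN: "p \<noteq> N" and pp: "p' \<noteq> p" "p'' \<noteq> p" and card: "p' + p'' = 2 * p"
    and nd: "row_nondegenerate N gN T d x p" and nz: "sinh (T*d) \<noteq> 0"
  shows "row_op N gN T d C p p' (row_op N gN T (- d) C' p p'' f) x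
       - row_op N gN T (- d) C' p p'' (row_op N gN T d C p p' f) x
     = C * C' * sinh (T*d) * sinh (T * (2 * sum (gam N gN x p) {1..p}
         - sum (gam N gN x p') {1..p'} - sum (gam N gN x p'') {1..p''})) * f x"
proof -
  define a b c where "a = gam N gN x p" and "b = gam N gN x p'" and "c = gam N gN x p''"
  have "(\<Sum>j=1..p. row_coeff N gN T d p p' x j * row_coeff N gN T (- d) p p'' (shift x p j d) j
         - row_coeff N gN T (- d) p p'' x j * row_coeff N gN T d p p' (shift x p j (- d)) j)
     = sinh (T*d) * sinh (T * (2 * sum a {1..p} - sum b {1..p'} - sum c {1..p''}))"
    unfolding row_coeff_shift_self[OF pN pp(1)] row_coeff_shift_self[OF pN pp(2)]
    unfolding row_coeff_def a_def[symmetric] b_def[symmetric] c_def[symmetric]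
    using row_nondegenerateD[OF nd] nz unfolding a_def
    by (intro sinh_partial_fraction_shifted_pairs[OF card]) auto
  then show ?thesis
    unfolding row_op_commutator_same_row_diagonal[OF pN pp] a_def b_def c_def by simp
qed

section \<open>The representation\<close>

lemma gam_shift:
  "m \<noteq> N \<Longrightarrow> gam N gN (shift x m j e) r i = gam N gN x r i + (if r = m \<and> i = j then e else 0)"
  by (auto simp: gam_def shift_def)

lemma Kexp_shift:
  assumes "m \<noteq> N" "j \<in> {1..m}" "1 \<le> n"
  shows "Kexp N w2 gN n (shift x m j e)
       = Kexp N w2 gN n x + 2 * of_real pi / w2 * e * (of_bool (n = m) - of_bool (n = m + 1))"
proof -
  have row_sum: "(\<Sum>i\<in>A. gam N gN (shift x m j e) r i)
      = (\<Sum>i\<in>A. gam N gN x r i) + (if r = m \<and> j \<in> A then e else 0)" if "finite A" for A r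
    using that by (simp add: gam_shift[OF assms(1)] sum.distrib) (auto intro!: sum.neutral)
  have cond: "(n = m \<and> j \<in> {1..n}) = (n = m)" "(n - 1 = m \<and> j \<in> {1..n-1}) = (n = m + 1)"
    using assms by auto
  show ?thesis
    unfolding Kexp_def row_sum[OF finite_atLeastAtMost] cond
    by (cases "n = m"; cases "n = m + 1") (simp_all add: algebra_simps)
qed

lemma Kop_row_op_Kinvop:
  assumes "m \<noteq> N" "1 \<le> n"
  shows "Kop N w2 gN n (row_op N gN T e C m m' (Kinvop N w2 gN n f)) x
       = exp (- (2 * of_real pi / w2 * e * (of_bool (n = m) - of_bool (n = m + 1))))
         * row_op N gN T e C m m' f x"
proof -
  let ?c = "exp (- (2 * of_real pi / w2 * e * (of_bool (n = m) - of_bool (n = m + 1))))"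
  have phase: "exp (Kexp N w2 gN n x) * exp (- Kexp N w2 gN n (shift x m j e)) = ?c" if "j \<in> {1..m}" for j
    by (simp add: Kexp_shift[OF assms(1) that assms(2)] mult_exp_exp)
  have "Kop N w2 gN n (row_op N gN T e C m m' (Kinvop N w2 gN n f)) x
      = C * (\<Sum>j=1..m. row_coeff N gN T e m m' x j
          * (exp (Kexp N w2 gN n x) * exp (- Kexp N w2 gN n (shift x m j e))) * f (shift x m j e))"
    unfolding Kop_def Kinvop_def row_op_def by (simp add: sum_distrib_left mult_ac)
  also have "\<dots> = ?c * row_op N gN T e C m m' f x"
    unfolding row_op_def using phase by (simp add: sum_distrib_left mult_ac)
  finally show ?thesis .
qed

definition E_const :: "complex \<Rightarrow> complex \<Rightarrow> nat \<Rightarrow> complex" where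
  "E_const w1 w2 n =
     2 * \<i> * exp (of_real pi * \<i> * w1 / w2 * (of_nat n - 1)) / sin (2 * of_real pi * w1 / w2)"

definition F_const :: "complex \<Rightarrow> complex \<Rightarrow> nat \<Rightarrow> complex" where
  "F_const w1 w2 n =
     - (\<i> * exp (- (of_real pi * \<i> * w1 / w2 * (of_nat n - 1))) / (2 * sin (2 * of_real pi * w1 / w2)))"

lemma Eop_eq_row_op:
  "Eop N w1 w2 gN n = row_op N gN (2 * of_real pi / w2) (- (\<i> * w1)) (E_const w1 w2 n) n (n+1)"
  unfolding Eop_def row_op_def row_coeff_def E_const_def
  by (intro ext arg_cong2[where f="(*)"] refl sum.cong arg_cong2[where f="(/)"] prod.cong)
     (simp_all add: algebra_simps)

lemma Fop_eq_row_op: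
  "Fop N w1 w2 gN n = row_op N gN (2 * of_real pi / w2) (\<i> * w1) (F_const w1 w2 n) n (n-1)"
  unfolding Fop_def row_op_def row_coeff_def F_const_def
  by (intro ext arg_cong2[where f="(*)"] refl sum.cong arg_cong2[where f="(/)"] prod.cong)

lemma generic_row_nondegenerate:
  assumes "generic N w1 w2 x" "n \<in> {1..<N}"
  shows "row_nondegenerate N gN (2 * of_real pi / w2) (of_int c * (\<i> * w1)) x n"
  unfolding row_nondegenerate_def
proof (intro ballI impI conjI)
  fix j k assume jk: "j \<in> {1..n}" "k \<in> {1..n}" "j \<noteq> k"
  have row: "gam N gN x n i = x n i" for i using assms(2) by (simp add: gam_def)
  have nz: "sinh (2 * of_real pi / w2 * (x n j - x n k + of_int z * \<i> * w1)) \<noteq> 0" for z :: int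
    using assms jk unfolding generic_def by blast
  show "sinh (2 * of_real pi / w2 * (gam N gN x n j - gam N gN x n k)) \<noteq> 0"
    using nz[of 0] unfolding row by simp
  show "sinh (2 * of_real pi / w2 * (gam N gN x n j - (gam N gN x n k + of_int c * (\<i> * w1)))) \<noteq> 0"
    using nz[of "- c"] unfolding row by (simp add: algebra_simps)
qed

lemma Kop_commute: "Kop N w2 gN n (Kop N w2 gN m f) x = Kop N w2 gN m (Kop N w2 gN n f) x"
  unfolding Kop_def by (simp add: mult_ac)

lemma Kop_Kinvop: "Kop N w2 gN n (Kinvop N w2 gN n f) x = f x"
  and Kinvop_Kop: "Kinvop N w2 gN n (Kop N w2 gN n f) x = f x"
  unfolding Kop_def Kinvop_def by (simp_all add: mult.assoc[symmetric] mult_exp_exp)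

lemma Kop_Eop_Kinvop:
  assumes "m \<in> {1..<N}" "1 \<le> n"
  shows "Kop N w2 gN n (Eop N w1 w2 gN m (Kinvop N w2 gN n f)) x
       = exp (2 * of_real pi * \<i> * w1 / w2) powi (of_bool (n = m) - of_bool (n = m + 1))
         * Eop N w1 w2 gN m f x"
  using assms unfolding Eop_eq_row_op by (simp add: Kop_row_op_Kinvop exp_power_int algebra_simps)

lemma Kop_Fop_Kinvop:
  assumes "m \<in> {1..<N}" "1 \<le> n"
  shows "Kop N w2 gN n (Fop N w1 w2 gN m (Kinvop N w2 gN n f)) x
       = exp (2 * of_real pi * \<i> * w1 / w2) powi (of_bool (n = m + 1) - of_bool (n = m))
         * Fop N w1 w2 gN m f x"
  using assms unfolding Fop_eq_row_op by (simp add: Kop_row_op_Kinvop exp_power_int algebra_simps)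

lemma q_add_inverse:
  assumes "d = \<i> * w1 \<or> d = - (\<i> * w1)"
  shows "exp (2 * of_real pi * \<i> * w1 / w2) + inverse (exp (2 * of_real pi * \<i> * w1 / w2))
       = exp (2 * of_real pi / w2 * d) + exp (- (2 * of_real pi / w2 * d))"
  using assms by (auto simp: exp_minus algebra_simps)

lemma commutator_const:
  assumes S: "sin (2 * of_real pi * w1 / w2) \<noteq> 0"
  defines "q \<equiv> exp (2 * of_real pi * \<i> * w1 / w2)"
  shows "E_const w1 w2 n * F_const w1 w2 n * sinh (2 * of_real pi / w2 * - (\<i> * w1)) * sinh z
       = (exp z - exp (- z)) / (q - inverse q)"
proof -
  let ?s = "sin (2 * of_real pi * w1 / w2)"
  have EF: "E_const w1 w2 n * F_const w1 w2 n = 1 / ?s\<^sup>2"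
    unfolding E_const_def F_const_def using S by (simp add: field_simps exp_minus power2_eq_square)
  have "E_const w1 w2 n * F_const w1 w2 n * sinh (2 * of_real pi / w2 * - (\<i> * w1)) * sinh z
      = 1 / ?s\<^sup>2 * (- \<i> * ?s) * sinh z"
    unfolding EF by (simp add: sinh_conv_sin algebra_simps)
  also have "\<dots> = (exp z - exp (- z)) / (2 * \<i> * ?s)"
    using S by (simp add: sinh_field_def field_simps power2_eq_square)
  also have "2 * \<i> * ?s = q - inverse q"
    unfolding q_def sin_exp_eq by (simp add: exp_minus field_simps)
  finally show ?thesis .
qed

lemma Eop_Fop_commutator_same_row:
  assumes S: "sin (2 * of_real pi * w1 / w2) \<noteq> 0"
    and x: "generic N w1 w2 x" and n: "n \<in> {1..<N}"
  defines "q \<equiv> exp (2 * of_real pi * \<i> * w1 / w2)"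
  shows "Eop N w1 w2 gN n (Fop N w1 w2 gN n f) x - Fop N w1 w2 gN n (Eop N w1 w2 gN n f) x
       = (Kop N w2 gN n (Kinvop N w2 gN (n+1) f) x - Kinvop N w2 gN n (Kop N w2 gN (n+1) f) x)
         / (q - inverse q)"
proof -
  define T d where "T = 2 * of_real pi / w2" and "d = - (\<i> * w1)"
  define M where "M = 2 * sum (gam N gN x n) {1..n} - sum (gam N gN x (n+1)) {1..n+1}
    - sum (gam N gN x (n-1)) {1..n-1}"
  have nd: "row_nondegenerate N gN T d x n"
    using generic_row_nondegenerate[OF x n, of gN "-1"] unfolding T_def d_def by simp
  have nz: "sinh (T*d) \<noteq> 0"
    using S unfolding T_def d_def by (simp add: sinh_conv_sin algebra_simps)
  have "Eop N w1 w2 gN n = row_op N gN T d (E_const w1 w2 n) n (n+1)"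
    "Fop N w1 w2 gN n = row_op N gN T (- d) (F_const w1 w2 n) n (n-1)"
    unfolding Eop_eq_row_op Fop_eq_row_op T_def d_def by simp_all
  then have "Eop N w1 w2 gN n (Fop N w1 w2 gN n f) x - Fop N w1 w2 gN n (Eop N w1 w2 gN n f) x
      = E_const w1 w2 n * F_const w1 w2 n * sinh (T*d) * sinh (T * M) * f x"
    unfolding M_def by (simp only:) (rule row_op_commutator_same_row[OF _ _ _ _ nd nz]; use n in auto)
  also have "\<dots> = (exp (T * M) - exp (- (T * M))) / (q - inverse q) * f x"
    unfolding T_def d_def q_def commutator_const[OF S] by simp
  also have "\<dots> = (Kop N w2 gN n (Kinvop N w2 gN (n+1) f) x - Kinvop N w2 gN n (Kop N w2 gN (n+1) f) x)
      / (q - inverse q)"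
  proof -
    have "Kexp N w2 gN n x - Kexp N w2 gN (n+1) x = T * M"
      unfolding M_def Kexp_def T_def by (simp add: algebra_simps)
    then show ?thesis
      unfolding Kop_def Kinvop_def mult.assoc[symmetric] mult_exp_exp
      by (simp add: algebra_simps flip: diff_conv_add_uminus)
  qed
  finally show ?thesis .
qed

lemma Eop_Fop_commutator:
  assumes S: "sin (2 * of_real pi * w1 / w2) \<noteq> 0"
    and x: "generic N w1 w2 x" and n: "n \<in> {1..<N}" and m: "m \<in> {1..<N}"
  defines "q \<equiv> exp (2 * of_real pi * \<i> * w1 / w2)"
  shows "Eop N w1 w2 gN n (Fop N w1 w2 gN m f) x - Fop N w1 w2 gN m (Eop N w1 w2 gN n f) x
       = (if n = m then (Kop N w2 gN n (Kinvop N w2 gN (n+1) f) x - Kinvop N w2 gN n (Kop N w2 gN (n+1) f) x)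
           / (q - inverse q) else 0)"
proof -
  consider "n = m" | "m = n + 1" | "n \<noteq> m" "m \<noteq> n + 1" by blast
  then show ?thesis
  proof cases
    case 1
    then show ?thesis unfolding q_def using Eop_Fop_commutator_same_row[OF S x n] by simp
  next
    case 2
    then show ?thesis
      unfolding Eop_eq_row_op Fop_eq_row_op
      using row_op_commute_adjacent[of n N "n+1" gN _ "- (\<i> * w1)"] n m by simp
  next
    case 3
    then show ?thesis
      unfolding Eop_eq_row_op Fop_eq_row_op using n m by (simp add: row_op_commute_disjoint)
  qed
qed

lemma serre_rels_Eop:
  "serre_rels N (exp (2 * of_real pi * \<i> * w1 / w2)) (Eop N w1 w2 gN) (generic N w1 w2)"
proof -
  define T d where "T = 2 * of_real pi / w2" and "d = - (\<i> * w1)"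
  have E: "Eop N w1 w2 gN n = row_op N gN T d (E_const w1 w2 n) n (n+1)" for n
    unfolding Eop_eq_row_op T_def d_def ..
  have Q: "exp (2 * of_real pi * \<i> * w1 / w2) + inverse (exp (2 * of_real pi * \<i> * w1 / w2))
      = exp (T*d) + exp (- (T*d))"
    unfolding T_def d_def by (rule q_add_inverse) simp
  have nd: "row_nondegenerate N gN T d x n" if "generic N w1 w2 x" "n \<in> {1..<N}" for x n
    using generic_row_nondegenerate[OF that, of gN "-1"] unfolding T_def d_def by simp
  show ?thesis
    unfolding serre_rels_def E Q
  proof (intro conjI allI ballI impI, goal_cases)
    case (1 n m f x)
    then show ?case by (cases "n = m") (auto intro!: row_op_commute_disjoint)
  next
    case (2 n f x)
    then show ?case by (intro row_op_serre_I nd) auto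
  next
    case (3 n f x)
    then show ?case by (intro row_op_serre_II nd) auto
  qed
qed

lemma serre_rels_Fop:
  "serre_rels N (exp (2 * of_real pi * \<i> * w1 / w2)) (Fop N w1 w2 gN) (generic N w1 w2)"
proof -
  define T d where "T = 2 * of_real pi / w2" and "d = \<i> * w1"
  have F: "Fop N w1 w2 gN n = row_op N gN T d (F_const w1 w2 n) n (n-1)" for n
    unfolding Fop_eq_row_op T_def d_def ..
  have Q: "exp (2 * of_real pi * \<i> * w1 / w2) + inverse (exp (2 * of_real pi * \<i> * w1 / w2))
      = exp (T*d) + exp (- (T*d))"
    unfolding T_def d_def by (rule q_add_inverse) simp
  have nd: "row_nondegenerate N gN T d x n" if "generic N w1 w2 x" "n \<in> {1..<N}" for x n
    using generic_row_nondegenerate[OF that, of gN 1] unfolding T_def d_def by simp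
  show ?thesis
    unfolding serre_rels_def F Q
  proof (intro conjI allI ballI impI, goal_cases)
    case (1 n m f x)
    then show ?case by (cases "n = m") (auto intro!: row_op_commute_disjoint)
  next
    case (2 n f x)
    then show ?case unfolding add_diff_cancel_right' by (intro row_op_serre_II nd) auto
  next
    case (3 n f x)
    then show ?case unfolding add_diff_cancel_right' by (intro row_op_serre_I nd) auto
  qed
qed

theorem proposition2:
  fixes N :: nat and w1 w2 :: complex and gN :: "nat \<Rightarrow> complex"
  assumes "N \<ge> 1" and "w1 \<noteq> 0" and "w2 \<noteq> 0"
    and "sin (2 * of_real pi * w1 / w2) \<noteq> 0"
  shows "Uq_gl_rep N (exp (2 * of_real pi * \<i> * w1 / w2))
           (Kop N w2 gN) (Kinvop N w2 gN) (Eop N w1 w2 gN) (Fop N w1 w2 gN)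
           (generic N w1 w2)"
  unfolding Uq_gl_rep_def
  using Kop_commute Kop_Kinvop Kinvop_Kop Kop_Eop_Kinvop Kop_Fop_Kinvop
    Eop_Fop_commutator[OF assms(4)] serre_rels_Eop serre_rels_Fop
  by auto

end
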